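(* For any $\alpha\in(0,1)$, the map $\mathscr R_\alpha:\mathcal V_1\to\mathcal V_1$ is continuous with respect to the norm $f\mapsto\|\rho f\|_{L^\infty}$.
   Context: Fix $\alpha\in(0,1)$ and set $c_{1,\alpha}=\frac{2^{2\alpha-1}\Gamma(\frac12+\alpha)}{\sqrt{\pi}\,\Gamma(1-\alpha)}$. For $\gamma\in(-1,1)$ define $F_{1,\gamma}$ on $(0,\infty)$ by $F_{1,\gamma}(t)=\frac{2\gamma(2+\gamma)t-(1+\gamma-t)(1+t)|1+t|^{\gamma}+(1-t)(1+\gamma+t)|1-t|^{\gamma}}{\gamma(1+\gamma)(2+\gamma)t}$ if $\gamma\neq0$ and $F_{1,0}(t)=1-\frac{1-t^2}{2t}\log\left|\frac{t+1}{t-1}\right|$, extended by continuity to $t=0$ (value $0$) and to $t=1$, and evenly to $t<0$. Let $\rho(x)=(1+|x|)^{-\alpha}$ and $\mathcal V_0=\{f\in C(\mathbb{R}): f\text{ even},\ \|\rho f\|_{L^\infty}<\infty\}$. Let $\eta=2\left(\frac{3}{2(3-2\alpha)(5-2\alpha)(1+4^{\alpha})}\right)^{1/\min(\alpha,1-\alpha)}$. $\mathcal V_1$ is the set of $f\in\mathcal V_0$ such that $f(0)=1$; $f\ge0$ and $f$ is non-increasing on $[0,\infty)$; $x\mapsto f(\sqrt x)$ is convex on $[0,\infty)$; $f(x)\ge\max(0,1-x^2)$ for all $x$; and $f'_-(1/2)\le-\eta$. For $f\in\mathcal V_1$ define $\mathscr T_\alpha(f)(x)=c_{1,\alpha}\int_0^\infty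 f'(\xi)\,\xi^{2-2\alpha}F_{1,1-2\alpha}(x/\xi)\,d\xi$, $c(f)=\frac{2\alpha(1+2\alpha)}{3}c_{1,\alpha}\int_0^\infty\frac{1-f(\xi)}{\xi^{1+2\alpha}}\,d\xi$, and $\mathscr R_\alpha(f)(x)=\max\big(0,1+\mathscr T_\alpha(f)(x)/c(f)\big)$; $\mathscr R_\alpha$ maps $\mathcal V_1$ into itself. *)

theory Defs
  imports "HOL-Analysis.Analysis"
begin

definition c1 :: "real \<Rightarrow> real" where
  "c1 \<alpha> = 2 powr (2*\<alpha> - 1) * Gamma (1/2 + \<alpha>) / (sqrt pi * Gamma (1 - \<alpha>))"

definition F1_raw :: "real \<Rightarrow> real \<Rightarrow> real" where
  "F1_raw \<gamma> t =
     (if \<gamma> \<noteq> 0 then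
        (2*\<gamma>*(2+\<gamma>)*t - (1+\<gamma>-t)*(1+t)*\<bar>1+t\<bar> powr \<gamma>
           + (1-t)*(1+\<gamma>+t)*\<bar>1-t\<bar> powr \<gamma>) / (\<gamma>*(1+\<gamma>)*(2+\<gamma>)*t)
      else 1 - (1 - t^2)/(2*t) * ln \<bar>(t+1)/(t-1)\<bar>)"

text \<open>Extension by continuity to t = 0 (value 0) and t = 1, and evenly to t < 0.
  The value at t = 1 is the limit of the formula (gamma > -1).\<close>
definition F1 :: "real \<Rightarrow> real \<Rightarrow> real" where
  "F1 \<gamma> t =
     (if t = 0 then 0
      else if \<bar>t\<bar> = 1 then
        (if \<gamma> \<noteq> 0 then (2*(2+\<gamma>) - 2 powr (1+\<gamma>)) / ((1+\<gamma>)*(2+\<gamma>)) else 1)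
      else F1_raw \<gamma> \<bar>t\<bar>)"

definition rho :: "real \<Rightarrow> real \<Rightarrow> real" where
  "rho \<alpha> x = (1 + \<bar>x\<bar>) powr (-\<alpha>)"

text \<open>The weighted norm f \<mapsto> \<parallel>rho f\<parallel>_{L^\<infinity>} (f is continuous, so ess sup = sup).\<close>
definition wnorm :: "real \<Rightarrow> (real \<Rightarrow> real) \<Rightarrow> real" where
  "wnorm \<alpha> f = (SUP x. \<bar>rho \<alpha> x * f x\<bar>)"

definition V0 :: "real \<Rightarrow> (real \<Rightarrow> real) set" where
  "V0 \<alpha> = {f. continuous_on UNIV f \<and> (\<forall>x. f (-x) = f x) \<and>
               bdd_above (range (\<lambda>x. \<bar>rho \<alpha> x * f x\<bar>))}"

definition eta :: "real \<Rightarrow> real" where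
  "eta \<alpha> = 2 * (3 / (2*(3 - 2*\<alpha>)*(5 - 2*\<alpha>)*(1 + 4 powr \<alpha>))) powr (1 / min \<alpha> (1 - \<alpha>))"

definition V1 :: "real \<Rightarrow> (real \<Rightarrow> real) set" where
  "V1 \<alpha> = {f. f \<in> V0 \<alpha> \<and> f 0 = 1 \<and>
               (\<forall>x\<ge>0. f x \<ge> 0) \<and> (\<forall>x y. 0 \<le> x \<and> x \<le> y \<longrightarrow> f y \<le> f x) \<and>
               convex_on {0..} (\<lambda>x. f (sqrt x)) \<and>
               (\<forall>x. f x \<ge> max 0 (1 - x^2)) \<and>
               (\<exists>L. ((\<lambda>x. (f x - f (1/2)) / (x - 1/2)) \<longlongrightarrow> L) (at_left (1/2)) \<and> L \<le> - eta \<alpha>)}"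

definition T_op :: "real \<Rightarrow> (real \<Rightarrow> real) \<Rightarrow> real \<Rightarrow> real" where
  "T_op \<alpha> f x = c1 \<alpha> * set_lebesgue_integral lborel {0<..}
      (\<lambda>\<xi>. deriv f \<xi> * \<xi> powr (2 - 2*\<alpha>) * F1 (1 - 2*\<alpha>) (x / \<xi>))"

definition c_f :: "real \<Rightarrow> (real \<Rightarrow> real) \<Rightarrow> real" where
  "c_f \<alpha> f = (2*\<alpha>*(1 + 2*\<alpha>)/3) * c1 \<alpha> *
      set_lebesgue_integral lborel {0<..} (\<lambda>\<xi>. (1 - f \<xi>) / \<xi> powr (1 + 2*\<alpha>))"

definition R_op :: "real \<Rightarrow> (real \<Rightarrow> real) \<Rightarrow> real \<Rightarrow> real" where
  "R_op \<alpha> f x = max 0 (1 + T_op \<alpha> f x / c_f \<alpha> f)"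

end

theory Submission
  imports Defs
begin

text \<open>For \<open>f \<in> V1 \<alpha>\<close> the function \<open>G s = f (sqrt s)\<close> is convex, non-increasing and
  squeezed between \<open>1 - s\<close> and \<open>1\<close>. Its right slope is monotone, lies in
  \<open>[max (-1) (-2/s), 0]\<close>, equals \<open>G'\<close> off a countable set, and converges along pointwise
  convergent sequences at each of its continuity points. Hence \<open>f' \<xi> = 2 \<xi> G'(\<xi>^2)\<close>
  satisfies \<open>\<bar>f' \<xi>\<bar> \<le> min (2 \<xi>) (4 / \<xi>)\<close>, and \<open>f\<^sub>n' \<rightarrow> f'\<close> almost everywhere.
  An elementary but lengthy analysis of the kernel gives \<open>0 \<le> F1 \<gamma> t \<le> C * min 1 (t^2)\<close>,
  so the integrands of \<open>T\<close> and \<open>c\<close> have a common integrable majorant; dominated convergence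
  gives \<open>T f\<^sub>n \<rightarrow> T f\<close> uniformly on compact sets and \<open>c f\<^sub>n \<rightarrow> c f > 0\<close>.
  Since \<open>F \<ge> 0\<close> and \<open>f' \<le> 0\<close>, \<open>T \<le> 0\<close> and so \<open>0 \<le> R f \<le> 1\<close>; the decay of the
  weight \<open>\<rho>\<close> then makes \<open>\<bar>x\<bar> > M\<close> negligible. Finally, convergence in the weighted
  norm implies pointwise convergence, so sequential continuity yields the \<open>\<epsilon>\<close>-\<open>\<delta>\<close> statement.\<close>

section \<open>Bounds for the kernel \<open>F1\<close>\<close>

lemma mult_powr_minus_one: "(x::real) > 0 \<Longrightarrow> x * x powr (a - 1) = x powr a"
  by (simp add: powr_diff)

text \<open>For \<open>0 < t < 1\<close> and \<open>c \<noteq> 0\<close> the numerator of \<open>F1 c t\<close> is \<open>N1 c t\<close>. Since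
  \<open>N1' = (2+c) Phi\<close>, \<open>Phi' = (1+c) (omega (1+t) - omega (1-t))\<close> and
  \<open>omega' s = c * s powr (c-2) * (s+1-c)\<close> has the sign of \<open>c\<close>, three applications of the
  mean value theorem from \<open>t = 0\<close> give \<open>0 \<le> N1 c t / c = O(t^3)\<close>.\<close>

definition N1 :: "real \<Rightarrow> real \<Rightarrow> real" where
  "N1 c t = 2*c*(2+c)*t - (1+c-t)*(1+t)*(1+t) powr c + (1+c+t)*(1-t)*(1-t) powr c"
definition Phi :: "real \<Rightarrow> real \<Rightarrow> real" where
  "Phi c t = 2*c - (c-t)*(1+t) powr c - (c+t)*(1-t) powr c"
definition omega :: "real \<Rightarrow> real \<Rightarrow> real" where
  "omega c s = (s - c) * s powr (c-1)"

lemma omega_deriv: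
  assumes "s > 0"
  shows "(omega c has_real_derivative c * s powr (c-2) * (s+1-c)) (at s)"
proof -
  have D: "(omega c has_real_derivative (1 * s powr (c-1) + (s - c) * ((c-1) * s powr (c-1-1)))) (at s)"
    unfolding omega_def using assms by (auto intro!: derivative_eq_intros)
  have e: "s powr (c-1) = s * s powr (c-1-1)"
    using assms mult_powr_minus_one[of s "c-1"] by simp
  have "1 * s powr (c-1) + (s - c) * ((c-1) * s powr (c-1-1)) = c * s powr (c-2) * (s+1-c)"
    by (simp only: e) (simp add: algebra_simps)
  with D show ?thesis by simp
qed

lemma Phi_deriv:
  assumes "-1 < t" "t < 1"
  shows "(Phi c has_real_derivative (1+c)*(omega c (1+t) - omega c (1-t))) (at t)"
proof -
  have D: "(Phi c has_real_derivative
      (- ((-1) * (1+t) powr c + (c-t) * (c * (1+t) powr (c-1)))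
       - (1 * (1-t) powr c + (c+t) * (c * (1-t) powr (c-1) * (-1))))) (at t)"
    unfolding Phi_def using assms by (auto intro!: derivative_eq_intros)
  have e1: "(1+t) powr c = (1+t) * (1+t) powr (c-1)"
    using assms mult_powr_minus_one[of "1+t" c] by simp
  have e2: "(1-t) powr c = (1-t) * (1-t) powr (c-1)"
    using assms mult_powr_minus_one[of "1-t" c] by simp
  have "(- ((-1) * (1+t) powr c + (c-t) * (c * (1+t) powr (c-1)))
       - (1 * (1-t) powr c + (c+t) * (c * (1-t) powr (c-1) * (-1)))) = (1+c)*(omega c (1+t) - omega c (1-t))"
    unfolding omega_def by (simp only: e1 e2) (simp add: algebra_simps)
  with D show ?thesis by simp
qed

lemma N1_deriv:
  assumes "-1 < t" "t < 1"
  shows "(N1 c has_real_derivative (2+c) * Phi c t) (at t)"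
proof -
  have D: "(N1 c has_real_derivative
      2*c*(2+c) - ((-1)*(1+t)*(1+t) powr c + (1+c-t)*1*(1+t) powr c + (1+c-t)*(1+t)*(c*(1+t) powr (c-1)))
      + (1*(1-t)*(1-t) powr c + (1+c+t)*(-1)*(1-t) powr c + (1+c+t)*(1-t)*(c*(1-t) powr (c-1)*(-1)))) (at t)"
    unfolding N1_def using assms by (auto intro!: derivative_eq_intros simp: algebra_simps)
  have e1: "(1+t) * (1+t) powr (c-1) = (1+t) powr c"
    using assms mult_powr_minus_one[of "1+t" c] by simp
  have e2: "(1-t) * (1-t) powr (c-1) = (1-t) powr c"
    using assms mult_powr_minus_one[of "1-t" c] by simp
  have "2*c*(2+c) - ((-1)*(1+t)*(1+t) powr c + (1+c-t)*1*(1+t) powr c + (1+c-t)*(1+t)*(c*(1+t) powr (c-1)))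
      + (1*(1-t)*(1-t) powr c + (1+c+t)*(-1)*(1-t) powr c + (1+c+t)*(1-t)*(c*(1-t) powr (c-1)*(-1)))
      = (2+c) * Phi c t"
  proof -
    have "(1+c-t)*(1+t)*(c*(1+t) powr (c-1)) = (1+c-t)*c*((1+t)*(1+t) powr (c-1))" by simp
    moreover have "(1+c+t)*(1-t)*(c*(1-t) powr (c-1)*(-1)) = -(1+c+t)*c*((1-t)*(1-t) powr (c-1))" by (simp add: algebra_simps)
    ultimately show ?thesis unfolding Phi_def e1 e2 by (simp add: algebra_simps)
  qed
  with D show ?thesis by simp
qed

lemma omega_diff_bounds:
  assumes "0 < s" "s < 1" "-1 < c" "c < 1" "c \<noteq> 0"
  shows "0 \<le> (omega c (1+s) - omega c (1-s)) / c \<and> (s \<le> 1/2 \<longrightarrow> (omega c (1+s) - omega c (1-s)) / c \<le> 56 * s)"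
proof -
  obtain z where z: "1-s < z" "z < 1+s" "omega c (1+s) - omega c (1-s) = ((1+s) - (1-s)) * (c * z powr (c-2) * (z+1-c))"
    using MVT2[of "1-s" "1+s" "omega c" "\<lambda>z. c * z powr (c-2) * (z+1-c)"] omega_deriv assms by force
  have q: "(omega c (1+s) - omega c (1-s)) / c = 2 * s * (z powr (c-2) * (z+1-c))"
    using z(3) assms by (simp add: field_simps)
  have zp: "z > 0" using z assms by simp
  have a: "0 \<le> z powr (c-2) * (z+1-c)" using zp assms by simp
  moreover have "s \<le> 1/2 \<longrightarrow> z powr (c-2) * (z+1-c) \<le> 8 * (7/2)"
  proof
    assume "s \<le> 1/2"
    then have z2: "z \<ge> 1/2" "z \<le> 3/2" using z by auto
    have "z powr (c-2) \<le> (1/2) powr (c-2)"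
      using z2 assms by (intro powr_mono2') auto
    also have "(1/2::real) powr (c-2) = 2 powr (2-c)"
      by (simp add: powr_minus_divide[symmetric] powr_divide)
    also have "\<dots> \<le> 2 powr 3" using assms by (intro powr_mono) auto
    finally have "z powr (c-2) \<le> 8" by simp
    moreover have "z+1-c \<le> 7/2" using z2 assms by simp
    moreover have "z+1-c \<ge> 0" using z2 assms by simp
    ultimately show "z powr (c-2) * (z+1-c) \<le> 8 * (7/2)"
      by (intro mult_mono) auto
  qed
  ultimately have b: "s \<le> 1/2 \<longrightarrow> 2 * s * (z powr (c-2) * (z+1-c)) \<le> 2 * s * 28"
    using assms by (intro impI mult_left_mono) auto
  have "0 \<le> 2 * s * (z powr (c-2) * (z+1-c))" using a assms by simp
  with b show ?thesis unfolding q by simp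
qed

lemma Phi_bounds:
  assumes "0 < t" "t < 1" "-1 < c" "c < 1" "c \<noteq> 0"
  shows "0 \<le> Phi c t / c \<and> (t \<le> 1/2 \<longrightarrow> Phi c t / c \<le> 112 * t^2)"
proof -
  obtain z where z: "0 < z" "z < t" "Phi c t - Phi c 0 = (t - 0) * ((1+c)*(omega c (1+z) - omega c (1-z)))"
    using MVT2[of 0 t "Phi c" "\<lambda>z. (1+c)*(omega c (1+z) - omega c (1-z))"] Phi_deriv assms by force
  have q: "Phi c t / c = t * (1+c) * ((omega c (1+z) - omega c (1-z)) / c)"
    using z(3) by (simp add: Phi_def)
  have o: "0 \<le> (omega c (1+z) - omega c (1-z)) / c \<and> (z \<le> 1/2 \<longrightarrow> (omega c (1+z) - omega c (1-z)) / c \<le> 56 * z)"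
    using omega_diff_bounds[of z c] z assms by simp
  have "0 \<le> t * (1+c)" using assms by simp
  then have A: "0 \<le> Phi c t / c" unfolding q using o assms by (intro mult_nonneg_nonneg) auto
  have "t \<le> 1/2 \<longrightarrow> Phi c t / c \<le> 112 * t^2"
  proof
    assume "t \<le> 1/2"
    then have "(omega c (1+z) - omega c (1-z)) / c \<le> 56 * t" using o z by auto
    then have "t * (1+c) * ((omega c (1+z) - omega c (1-z)) / c) \<le> t * (1+c) * (56 * t)"
      using \<open>0 \<le> t * (1+c)\<close> by (rule mult_left_mono)
    also have "\<dots> \<le> t * 2 * (56 * t)" using assms by (intro mult_right_mono mult_left_mono) auto
    finally show "Phi c t / c \<le> 112 * t^2" unfolding q by (simp add: power2_eq_square)
  qed
  with A show ?thesis by blast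
qed

lemma N1_bounds:
  assumes "0 < t" "t < 1" "-1 < c" "c < 1" "c \<noteq> 0"
  shows "0 \<le> N1 c t / c \<and> (t \<le> 1/2 \<longrightarrow> N1 c t / c \<le> 336 * t^3)"
proof -
  obtain z where z: "0 < z" "z < t" "N1 c t - N1 c 0 = (t - 0) * ((2+c) * Phi c z)"
    using MVT2[of 0 t "N1 c" "\<lambda>z. (2+c) * Phi c z"] N1_deriv assms by force
  have q: "N1 c t / c = t * (2+c) * (Phi c z / c)"
    using z(3) by (simp add: N1_def)
  have o: "0 \<le> Phi c z / c \<and> (z \<le> 1/2 \<longrightarrow> Phi c z / c \<le> 112 * z^2)"
    using Phi_bounds[of z c] z assms by simp
  have "0 \<le> t * (2+c)" using assms by simp
  then have A: "0 \<le> N1 c t / c" unfolding q using o assms by (intro mult_nonneg_nonneg) auto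
  have "t \<le> 1/2 \<longrightarrow> N1 c t / c \<le> 336 * t^3"
  proof
    assume "t \<le> 1/2"
    then have "z^2 \<le> t^2" using z by (intro power_mono) auto
    moreover have "Phi c z / c \<le> 112 * z^2" using o z \<open>t \<le> 1/2\<close> by auto
    ultimately have "Phi c z / c \<le> 112 * t^2" by linarith
    then have "t * (2+c) * (Phi c z / c) \<le> t * (2+c) * (112 * t^2)"
      using \<open>0 \<le> t * (2+c)\<close> by (rule mult_left_mono)
    also have "\<dots> \<le> t * 3 * (112 * t^2)" using assms by (intro mult_right_mono mult_left_mono) auto
    finally show "N1 c t / c \<le> 336 * t^3" unfolding q by (simp add: power3_eq_cube power2_eq_square)
  qed
  with A show ?thesis by blast
qed

lemma powr_mvt:
  fixes a b p :: real
  assumes "0 < b" "b < a"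
  shows "\<exists>z. b < z \<and> z < a \<and> a powr p - b powr p = (a - b) * (p * z powr (p - 1))"
proof -
  have "\<And>x. b \<le> x \<Longrightarrow> x \<le> a \<Longrightarrow> ((\<lambda>x. x powr p) has_real_derivative p * x powr (p - 1)) (at x)"
    using assms by (auto intro!: derivative_eq_intros)
  then show ?thesis using MVT2[OF assms(2), of "\<lambda>x. x powr p" "\<lambda>x. p * x powr (p - 1)"] by auto
qed

text \<open>For \<open>t > 1\<close> the numerator is \<open>N2 c t\<close>; it satisfies \<open>N2' = (2+c) Phi2\<close> with
  \<open>Phi2 / c \<ge> 2\<close>, so \<open>N2 c t / c\<close> increases from its positive value at \<open>t = 1\<close>.\<close>

definition N2 :: "real \<Rightarrow> real \<Rightarrow> real" where
  "N2 c t = 2*c*(2+c)*t - (1+c-t)*(1+t) powr (1+c) - (1+c+t)*(t-1) powr (1+c)"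
definition Phi2 :: "real \<Rightarrow> real \<Rightarrow> real" where
  "Phi2 c t = 2*c + (t-c)*(1+t) powr c - (t+c)*(t-1) powr c"

lemma N2_deriv:
  assumes "1 < t" "-1 < c"
  shows "(N2 c has_real_derivative (2+c) * Phi2 c t) (at t)"
proof -
  have D: "(N2 c has_real_derivative
      2*c*(2+c) - ((-1)*(1+t) powr (1+c) + (1+c-t)*((1+c)*(1+t) powr (1+c-1)))
      - (1*(t-1) powr (1+c) + (1+c+t)*((1+c)*(t-1) powr (1+c-1)))) (at t)"
    unfolding N2_def using assms by (auto intro!: derivative_eq_intros)
  have e1: "(1+t) powr (1+c) = (1+t) * (1+t) powr c"
    using assms mult_powr_minus_one[of "1+t" "1+c"] by simp
  have e2: "(t-1) powr (1+c) = (t-1) * (t-1) powr c"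
    using assms mult_powr_minus_one[of "t-1" "1+c"] by simp
  have "2*c*(2+c) - ((-1)*(1+t) powr (1+c) + (1+c-t)*((1+c)*(1+t) powr (1+c-1)))
      - (1*(t-1) powr (1+c) + (1+c+t)*((1+c)*(t-1) powr (1+c-1))) = (2+c) * Phi2 c t"
    unfolding Phi2_def e1 e2 by (simp add: algebra_simps)
  with D show ?thesis by simp
qed

lemma powr_chord_ge:
  fixes b d c :: real
  assumes "0 < b" "b < d" "c < 1" "c \<noteq> 0"
  shows "(d - b) * d powr (c - 1) \<le> (d powr c - b powr c) / c"
proof -
  obtain z where z: "b < z" "z < d" "d powr c - b powr c = (d - b) * (c * z powr (c - 1))"
    using powr_mvt[OF assms(1,2), of c] by auto
  have "(d powr c - b powr c) / c = (d - b) * z powr (c - 1)" using z assms by simp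
  moreover have "d powr (c - 1) \<le> z powr (c - 1)"
    using z assms by (intro powr_mono2') auto
  ultimately show ?thesis using assms by (simp add: mult_left_mono)
qed

lemma Phi2_ge_two:
  assumes "1 < t" "-1 < c" "c < 1" "c \<noteq> 0"
  shows "Phi2 c t / c \<ge> 2"
proof -
  define b where "b = t - 1"
  have b: "b > 0" using assms b_def by simp
  \<comment> \<open>\<open>H s\<close> is the error of the trapezoidal rule for the integral of \<open>x powr c\<close> over
    \<open>[b, b+s]\<close>; it has the sign of \<open>c\<close>, as \<open>x powr c\<close> is concave for \<open>0 < c < 1\<close> and
    convex for \<open>c < 0\<close>.\<close>
  define H where "H s = ((b+s) powr (1+c) - b powr (1+c))/(1+c) - s*(b powr c + (b+s) powr c)/2" for s
  have HD: "(H has_real_derivative ((b+s) powr c - b powr c - s*c*(b+s) powr (c-1))/2) (at s)"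
    if "0 \<le> s" for s
  proof -
    have D: "(H has_real_derivative
       ((1+c)*(b+s) powr (1+c-1) * 1)/(1+c) - ((1*(b powr c + (b+s) powr c) + s*(c*(b+s) powr (c-1)*1))/2)) (at s)"
      unfolding H_def using that b assms by (auto intro!: derivative_eq_intros)
    have eq: "(1+c)*(b+s) powr (1+c-1)*1/(1+c) = (b+s) powr c" using assms by simp
    show ?thesis using D unfolding eq by (rule DERIV_cong) (simp add: field_simps)
  qed
  obtain z where z: "0 < z" "z < 2" "H 2 - H 0 = (2 - 0) * (((b+z) powr c - b powr c - z*c*(b+z) powr (c-1))/2)"
    using MVT2[of 0 2 H] HD by force
  have "z * (b+z) powr (c-1) \<le> ((b+z) powr c - b powr c) / c"
    using powr_chord_ge[of b "b+z" c] b z assms by simp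
  then have "0 \<le> ((b+z) powr c - b powr c - z*c*(b+z) powr (c-1)) / c"
    using assms by (simp add: diff_divide_distrib)
  moreover have "H 0 = 0" by (simp add: H_def)
  then have "H 2 = (b+z) powr c - b powr c - z*c*(b+z) powr (c-1)" using z(3) by simp
  ultimately have H2: "0 \<le> H 2 / c" by simp
  have "Phi2 c t = (1+c) * H 2 + 2*c"
  proof -
    have e1: "(b+2) powr (1+c) = (b+2) * (b+2) powr c" using b mult_powr_minus_one[of "b+2" "1+c"] by simp
    have e2: "b powr (1+c) = b * b powr c" using b mult_powr_minus_one[of "b" "1+c"] by simp
    have tb: "t = b + 1" "1 + t = b + 2" "t - 1 = b" using b_def by auto
    show ?thesis unfolding Phi2_def H_def tb e1 e2 using assms by (simp add: field_simps)
  qed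
  then have "Phi2 c t / c = (1+c) * (H 2 / c) + 2" using assms by (simp add: field_simps)
  moreover have "0 \<le> (1+c) * (H 2 / c)" using H2 assms by (intro mult_nonneg_nonneg) auto
  ultimately show ?thesis by simp
qed

lemma N2_one: "-1 < c \<Longrightarrow> N2 c 1 = c * (2*(2+c) - 2 powr (1+c))"
  by (simp add: N2_def algebra_simps)

lemma two_powr_lt:
  fixes c :: real
  assumes "-1 < c" "c < 1"
  shows "2 powr (1+c) < 2*(2+c)"
proof (cases "c \<le> 0")
  case True
  then have "2 powr (1+c) \<le> 2 powr 1" by (intro powr_mono) auto
  then show ?thesis using assms by simp
next
  case False
  then have "2 powr (1+c) \<le> 2 powr 2" using assms by (intro powr_mono) auto
  then show ?thesis using assms False by simp
qed

lemma continuous_on_N2: "-1 < c \<Longrightarrow> continuous_on {1..} (N2 c)"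
  unfolding N2_def by (intro continuous_intros continuous_on_powr') auto

lemma N2_lower:
  assumes "1 \<le> t" "-1 < c" "c < 1" "c \<noteq> 0"
  shows "N2 c t / c \<ge> 2*(2+c) - 2 powr (1+c)"
proof -
  have "N2 c 1 / c \<le> N2 c t / c"
  proof (rule DERIV_nonneg_imp_increasing_open[OF assms(1)])
    fix x assume x: "1 < x" "x < t"
    have "((\<lambda>t. N2 c t / c) has_real_derivative (2+c) * Phi2 c x / c) (at x)"
      using N2_deriv[of x c] x assms by (auto intro!: derivative_eq_intros)
    moreover have "(2+c) * Phi2 c x / c \<ge> 0"
      using Phi2_ge_two[of x c] x assms by (simp add: mult_nonneg_nonneg times_divide_eq_right[symmetric] del: times_divide_eq_right)
    ultimately show "\<exists>y. ((\<lambda>t. N2 c t / c) has_real_derivative y) (at x) \<and> 0 \<le> y" by blast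
  next
    show "continuous_on {1..t} (\<lambda>t. N2 c t / c)"
      using continuous_on_N2[of c] assms by (intro continuous_intros) (auto elim: continuous_on_subset)
  qed
  then show ?thesis using N2_one[of c] assms by simp
qed

lemma N2_eq_mvt:
  assumes "1 < t" "-1 < c"
  obtains z where "t - 1 < z" "z < t + 1"
    "N2 c t = 2*c*(2+c)*t + (2+c) * (2 * z powr (1+c) - (t+1) powr (1+c) - (t-1) powr (1+c))"
proof -
  have ab: "0 < t - 1" "t - 1 < t + 1" using assms by auto
  obtain z where z: "t - 1 < z" "z < t + 1"
    "(t+1) powr (2+c) - (t-1) powr (2+c) = ((t+1) - (t-1)) * ((2+c) * z powr (2+c-1))"
    using powr_mvt[OF ab, of "2+c"] by auto
  have "(t+1) powr (2+c) = (t+1) * (t+1) powr (1+c)" "(t-1) powr (2+c) = (t-1) * (t-1) powr (1+c)"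
    using ab mult_powr_minus_one[of "t+1" "2+c"] mult_powr_minus_one[of "t-1" "2+c"] by simp_all
  moreover have "2 + c - 1 = 1 + c" by simp
  ultimately have "N2 c t = 2*c*(2+c)*t + (2+c) * (2 * z powr (1+c) - (t+1) powr (1+c) - (t-1) powr (1+c))"
    using z(3) by (simp add: N2_def algebra_simps)
  with z(1,2) show ?thesis by (rule that)
qed

lemma N2_upper_pos:
  assumes "1 < t" "0 < c" "c < 1"
  shows "N2 c t \<le> 30 * t"
proof -
  obtain z where z: "t - 1 < z" "z < t + 1"
    and N2: "N2 c t = 2*c*(2+c)*t + (2+c) * (2 * z powr (1+c) - (t+1) powr (1+c) - (t-1) powr (1+c))"
    using N2_eq_mvt[of t c] assms by auto
  have ab: "0 < t - 1" "t - 1 < t + 1" using assms by auto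
  obtain w where w: "t - 1 < w" "w < t + 1"
    "(t+1) powr (1+c) - (t-1) powr (1+c) = ((t+1) - (t-1)) * ((1+c) * w powr (1+c-1))"
    using powr_mvt[OF ab, of "1+c"] by auto
  have "w powr c \<le> (t+1) powr c" using w assms by (intro powr_mono2) auto
  also have "\<dots> \<le> (t+1) powr 1" using assms by (intro powr_mono) auto
  finally have "2 * ((1+c) * w powr c) \<le> 2 * ((1+c) * (t+1))"
    using assms by (intro mult_left_mono) auto
  then have "(t+1) powr (1+c) - (t-1) powr (1+c) \<le> 2 * (1+c) * (t+1)"
    using w(3) by (simp add: algebra_simps)
  moreover have "z powr (1+c) \<le> (t+1) powr (1+c)" using z assms by (intro powr_mono2) auto
  ultimately have "2 * z powr (1+c) - (t+1) powr (1+c) - (t-1) powr (1+c) \<le> 2 * (1+c) * (t+1)"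
    by simp
  then have "(2+c) * (2 * z powr (1+c) - (t+1) powr (1+c) - (t-1) powr (1+c)) \<le> (2+c) * (2 * (1+c) * (t+1))"
    using assms by (intro mult_left_mono) auto
  also have "\<dots> \<le> 3 * (2 * 2 * (t+1))" using assms by (intro mult_mono) auto
  finally have "(2+c) * (2 * z powr (1+c) - (t+1) powr (1+c) - (t-1) powr (1+c)) \<le> 12 * t + 12"
    by simp
  moreover have "2*c*(2+c)*t \<le> 2*1*3*t" using assms by (intro mult_right_mono mult_mono) auto
  ultimately show ?thesis unfolding N2 using assms by linarith
qed

lemma N2_lower_neg:
  assumes "1 < t" "-1 < c" "c < 0"
  shows "-12 * t \<le> N2 c t"
proof -
  obtain z where z: "t - 1 < z" "z < t + 1"
    and N2: "N2 c t = 2*c*(2+c)*t + (2+c) * (2 * z powr (1+c) - (t+1) powr (1+c) - (t-1) powr (1+c))"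
    using N2_eq_mvt[of t c] assms by auto
  have "(t+1) powr (1+c) \<le> (t+1) powr 1" using assms by (intro powr_mono) auto
  then have "(t+1) powr (1+c) \<le> t + 1" using assms by simp
  moreover have "(t-1) powr (1+c) \<le> z powr (1+c)" using z assms by (intro powr_mono2) auto
  moreover have "0 \<le> z powr (1+c)" by simp
  ultimately have "-(t+1) \<le> 2 * z powr (1+c) - (t+1) powr (1+c) - (t-1) powr (1+c)" by linarith
  then have "(2+c) * -(t+1) \<le> (2+c) * (2 * z powr (1+c) - (t+1) powr (1+c) - (t-1) powr (1+c))"
    using assms by (intro mult_left_mono) auto
  moreover have "3 * -(t+1) \<le> (2+c) * -(t+1)" using assms by (intro mult_right_mono_neg) auto
  ultimately have "3 * -(t+1) \<le> (2+c) * (2 * z powr (1+c) - (t+1) powr (1+c) - (t-1) powr (1+c))"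
    by (rule order_trans[rotated])
  moreover have "-1 \<le> c * (2+c)" using zero_le_power2[of "1+c"] by (simp add: algebra_simps power2_eq_square)
  then have "2 * -1 * t \<le> 2 * (c * (2+c)) * t" using assms by (intro mult_right_mono) auto
  then have "-2 * t \<le> 2*c*(2+c)*t" by (simp add: mult.assoc)
  ultimately have "-2 * t + 3 * -(t+1) \<le> N2 c t" unfolding N2 by (rule add_mono[rotated])
  then show ?thesis using assms by (simp add: algebra_simps)
qed

lemma N2_upper:
  assumes "1 < t" "-1 < c" "c < 1" "c \<noteq> 0"
  shows "N2 c t / c \<le> 30 * t / \<bar>c\<bar>"
proof (cases "0 < c")
  case True
  then show ?thesis using N2_upper_pos[of t c] assms by (simp add: divide_right_mono)
next
  case False
  then have "c < 0" using assms by simp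
  then have "N2 c t / c \<le> (-12 * t) / c" using N2_lower_neg[of t c] assms by (intro divide_right_mono_neg) auto
  also have "\<dots> = 12 * t / \<bar>c\<bar>" using \<open>c < 0\<close> by simp
  also have "\<dots> \<le> 30 * t / \<bar>c\<bar>" using assms by (intro divide_right_mono) auto
  finally show ?thesis .
qed

lemma F1_raw_eq_N1:
  assumes "0 < s" "s < 1" "c \<noteq> 0"
  shows "F1_raw c s = (N1 c s / c) / ((1+c)*(2+c)* s)"
proof -
  have "\<bar>1+s\<bar> = 1+s" "\<bar>1-s\<bar> = 1-s" using assms by auto
  then show ?thesis unfolding F1_raw_def N1_def using assms by (simp add: field_simps)
qed

lemma F1_raw_eq_N2:
  assumes "1 < s" "c \<noteq> 0" "-1 < c"
  shows "F1_raw c s = (N2 c s / c) / ((1+c)*(2+c)* s)"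
proof -
  have e1: "\<bar>1+s\<bar> = 1+s" "\<bar>1-s\<bar> = s-1" using assms by auto
  have e2: "(1+s) * (1+s) powr c = (1+s) powr (1+c)" using assms mult_powr_minus_one[of "1+s" "1+c"] by simp
  have e3: "(s-1) * (s-1) powr c = (s-1) powr (1+c)" using assms mult_powr_minus_one[of "s-1" "1+c"] by simp
  have "(1+c-s)*(1+s)*(1+s) powr c = (1+c-s)*(1+s) powr (1+c)" using e2 by (simp add: mult.assoc)
  moreover have "(1-s)*(1+c+s)*(s-1) powr c = -(1+c+s)*(s-1) powr (1+c)" using e3
    by (simp add: algebra_simps)
  ultimately show ?thesis unfolding F1_raw_def N2_def e1 using assms by (simp add: field_simps)
qed

lemma abs_N1_le:
  assumes "0 < s" "s < 1" "-1 < c" "c < 1"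
  shows "\<bar>N1 c s\<bar> \<le> 17"
proof -
  have a1: "\<bar>2*c*(2+c)* s\<bar> \<le> 6"
  proof -
    have "\<bar>2*c*(2+c)* s\<bar> = 2*\<bar>c\<bar>*(2+c)* s" using assms by (simp add: abs_mult)
    also have "\<dots> \<le> 2*1*3*1" using assms by (intro mult_mono) auto
    finally show ?thesis by simp
  qed
  have p: "(1+s) powr c \<le> 2"
  proof -
    have "(1+s) powr c \<le> (1+s) powr 1" using assms by (intro powr_mono) auto
    then show ?thesis using assms by simp
  qed
  have a2: "\<bar>(1+c-s)*(1+s)*(1+s) powr c\<bar> \<le> 8"
  proof -
    have "\<bar>(1+c-s)*(1+s)*(1+s) powr c\<bar> = \<bar>1+c-s\<bar>*(1+s)*(1+s) powr c" using assms by (simp add: abs_mult)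
    also have "\<dots> \<le> 2*2*2" using assms p by (intro mult_mono) auto
    finally show ?thesis by simp
  qed
  have q: "(1-s)*(1-s) powr c \<le> 1"
  proof -
    have "(1-s)*(1-s) powr c = (1-s) powr (1+c)" using assms mult_powr_minus_one[of "1-s" "1+c"] by simp
    also have "\<dots> \<le> 1" using assms by (intro powr_le1) auto
    finally show ?thesis .
  qed
  have a3: "\<bar>(1+c+s)*(1-s)*(1-s) powr c\<bar> \<le> 3"
  proof -
    have "\<bar>(1+c+s)*(1-s)*(1-s) powr c\<bar> = (1+c+s)*((1-s)*(1-s) powr c)" using assms by (simp add: abs_mult)
    also have "\<dots> \<le> 3*1" using assms q by (intro mult_mono) auto
    finally show ?thesis by simp
  qed
  show ?thesis unfolding N1_def using a1 a2 a3 by linarith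
qed

lemma F1_raw_le_near_zero:
  assumes "-1 < c" "c < 1" "c \<noteq> 0" "0 < s" "s \<le> 1/2"
  shows "F1_raw c s \<le> 336 / ((1+c)*(2+c)) * s^2"
proof -
  have "F1_raw c s = (N1 c s / c) / ((1+c)*(2+c) * s)"
    using F1_raw_eq_N1 assms by simp
  also have "\<dots> \<le> (336 * s^3) / ((1+c)*(2+c) * s)"
    using N1_bounds[of s c] assms by (intro divide_right_mono) auto
  also have "\<dots> = (336 * s^2 * s) / (((1+c)*(2+c)) * s)"
    by (simp add: power2_eq_square power3_eq_cube mult.assoc)
  also have "\<dots> = 336 / ((1+c)*(2+c)) * s^2"
    using assms by (subst nonzero_mult_divide_mult_cancel_right) auto
  finally show ?thesis .
qed

lemma F1_raw_le_mid:
  assumes "-1 < c" "c < 1" "c \<noteq> 0" "1/2 < s" "s < 1"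
  shows "F1_raw c s \<le> 34 / (\<bar>c\<bar> * (1+c))"
proof -
  have "N1 c s / c \<le> \<bar>N1 c s\<bar> / \<bar>c\<bar>"
    using abs_ge_self[of "N1 c s / c"] by (simp only: abs_divide)
  also have "\<dots> \<le> 17 / \<bar>c\<bar>" using abs_N1_le[of s c] assms by (intro divide_right_mono) auto
  finally have "(N1 c s / c) / ((1+c)*(2+c) * s) \<le> (17 / \<bar>c\<bar>) / ((1+c)*(2+c) * s)"
    using assms by (intro divide_right_mono) auto
  then have "F1_raw c s \<le> (17 / \<bar>c\<bar>) / ((1+c)*(2+c) * s)"
    using F1_raw_eq_N1[of s c] assms by simp
  also have "\<dots> = 17 / ((\<bar>c\<bar> * (1+c)) * ((2+c) * s))" by (simp add: mult.assoc)
  also have "\<dots> \<le> 17 / ((\<bar>c\<bar> * (1+c)) * (1/2))"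
  proof -
    have "1/2 \<le> 1 * s" using assms by simp
    also have "\<dots> \<le> (2+c) * s" using assms by (intro mult_right_mono) auto
    finally show ?thesis using assms by (intro divide_left_mono mult_left_mono) auto
  qed
  finally show ?thesis by simp
qed

lemma F1_raw_inner_bounds:
  assumes "-1 < c" "c < 1" "c \<noteq> 0" "0 < s" "s < 1"
  shows "0 \<le> F1_raw c s \<and> F1_raw c s \<le> 400 / (\<bar>c\<bar> * (1+c)) * s^2"
proof -
  have D: "0 < \<bar>c\<bar> * (1+c)" "\<bar>c\<bar> * (1+c) \<le> (1+c) * (2+c)"
    using assms mult_right_mono[of "\<bar>c\<bar>" "2+c" "1+c"] by (auto simp: mult.commute)
  have "0 \<le> N1 c s / c" using N1_bounds[of s c] assms by simp
  then have "0 \<le> (N1 c s / c) / ((1+c)*(2+c) * s)"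
    by (rule divide_nonneg_pos) (use assms in simp)
  then have "0 \<le> F1_raw c s" using F1_raw_eq_N1[of s c] assms by simp
  moreover have "F1_raw c s \<le> 400 / (\<bar>c\<bar> * (1+c)) * s^2"
  proof (cases "s \<le> 1/2")
    case True
    then have "F1_raw c s \<le> 336 / ((1+c)*(2+c)) * s^2" using F1_raw_le_near_zero assms by simp
    also have "\<dots> \<le> 400 / (\<bar>c\<bar> * (1+c)) * s^2" using D by (intro mult_right_mono frac_le) auto
    finally show ?thesis .
  next
    case False
    then have "F1_raw c s \<le> 34 / (\<bar>c\<bar> * (1+c))" using F1_raw_le_mid assms by simp
    also have "\<dots> \<le> 400 / (\<bar>c\<bar> * (1+c)) * (1/4)" using D by (simp add: divide_right_mono)
    also have "\<dots> \<le> 400 / (\<bar>c\<bar> * (1+c)) * s^2"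
      using False power_mono[of "1/2" s 2] D by (intro mult_left_mono) (auto simp: power2_eq_square)
    finally show ?thesis .
  qed
  ultimately show ?thesis ..
qed

lemma F1_raw_outer_bounds:
  assumes "-1 < c" "c < 1" "c \<noteq> 0" "1 < s"
  shows "0 \<le> F1_raw c s \<and> F1_raw c s \<le> 400 / (\<bar>c\<bar> * (1+c))"
proof -
  have v: "F1_raw c s = (N2 c s / c) / ((1+c)*(2+c) * s)"
    using F1_raw_eq_N2 assms by simp
  have den: "(1+c)*(2+c) * s > 0" using assms by simp
  have "0 \<le> N2 c s / c" using N2_lower[of s c] two_powr_lt[of c] assms by simp
  then have "0 \<le> F1_raw c s" unfolding v using den by (rule divide_nonneg_pos)
  moreover have "F1_raw c s \<le> 400 / (\<bar>c\<bar> * (1+c))"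
  proof -
    have "F1_raw c s \<le> (30 * s / \<bar>c\<bar>) / ((1+c)*(2+c) * s)"
      unfolding v using den N2_upper[of s c] assms by (intro divide_right_mono) auto
    also have "\<dots> = (30 * s) / ((\<bar>c\<bar> * (1+c) * (2+c)) * s)" by (simp add: mult_ac)
    also have "\<dots> = 30 / (\<bar>c\<bar> * (1+c) * (2+c))"
      using assms by (subst nonzero_mult_divide_mult_cancel_right) auto
    also have "\<dots> \<le> 400 / (\<bar>c\<bar> * (1+c))"
    proof -
      have pos: "0 < \<bar>c\<bar> * (1+c)" using assms by simp
      then have "\<bar>c\<bar> * (1+c) * 1 \<le> \<bar>c\<bar> * (1+c) * (2+c)" using assms by (intro mult_left_mono) auto
      then show ?thesis using pos by (intro frac_le) auto
    qed
    finally show ?thesis .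
  qed
  ultimately show ?thesis ..
qed

lemma F1_one_bounds:
  assumes "-1 < c" "c < 1" "c \<noteq> 0"
  shows "0 \<le> F1 c 1 \<and> F1 c 1 \<le> 400 / (\<bar>c\<bar> * (1+c))"
proof -
  have v: "F1 c 1 = (2*(2+c) - 2 powr (1+c)) / ((1+c)*(2+c))" using assms by (simp add: F1_def)
  have pos: "0 < (2::real) powr (1+c)" by simp
  have "0 \<le> 2*(2+c) - 2 powr (1+c)" using two_powr_lt[of c] assms by simp
  moreover have "2*(2+c) - 2 powr (1+c) \<le> 400" using pos assms by (smt (verit))
  ultimately have p: "0 \<le> 2*(2+c) - 2 powr (1+c)" "2*(2+c) - 2 powr (1+c) \<le> 400" .
  have "\<bar>c\<bar> * (1+c) \<le> (1+c)*(2+c)"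
    using mult_right_mono[of "\<bar>c\<bar>" "2+c" "1+c"] assms by (simp add: mult.commute)
  then show ?thesis unfolding v using p assms by (auto intro: frac_le)
qed

lemma F1_bounds_nonzero:
  assumes "-1 < c" "c < 1" "c \<noteq> 0"
  shows "0 \<le> F1 c t \<and> F1 c t \<le> 400 / (\<bar>c\<bar> * (1+c)) * min 1 (t^2)"
proof -
  consider "t = 0" | "\<bar>t\<bar> = 1" | "0 < \<bar>t\<bar>" "\<bar>t\<bar> < 1" | "1 < \<bar>t\<bar>" by linarith
  then show ?thesis
  proof cases
    case 2
    then have "min 1 (t^2) = 1" by (simp add: abs_square_eq_1[symmetric])
    then show ?thesis using 2 F1_one_bounds[OF assms] by (simp add: F1_def)
  next
    case 3
    then have "min 1 (t^2) = \<bar>t\<bar>^2" by (simp add: abs_square_le_1)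
    then show ?thesis using 3 F1_raw_inner_bounds[OF assms, of "\<bar>t\<bar>"] by (simp add: F1_def)
  next
    case 4
    then have "min 1 (t^2) = 1" using one_le_power[of "\<bar>t\<bar>" 2] by (simp add: min_def)
    then show ?thesis using 4 F1_raw_outer_bounds[OF assms, of "\<bar>t\<bar>"] by (simp add: F1_def)
  qed (simp add: F1_def)
qed

text \<open>For \<open>c = 0\<close> the kernel is \<open>F1 0 t = N0 t / t\<close> on \<open>0 < t < 1\<close>.\<close>

definition N0 :: "real \<Rightarrow> real" where
  "N0 s = s - (1 - s^2)/2 * (ln (1+s) - ln (1-s))"

lemma N0_deriv:
  assumes "-1 < s" "s < 1"
  shows "(N0 has_real_derivative s * (ln (1+s) - ln (1-s))) (at s)"
proof -
  have n: "1 + s \<noteq> 0" "1 - s \<noteq> 0" using assms by auto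
  have k: "(1/(1+s) + 1/(1-s)) * (1 - s^2) = 2"
  proof -
    have "1 - s^2 = (1+s)*(1-s)" by (simp add: algebra_simps power2_eq_square)
    moreover have "\<And>a b x y::real. (a+b)*(x*y) = a*x*y + b*y*x" by (simp add: algebra_simps)
    ultimately have "(1/(1+s) + 1/(1-s)) * (1 - s^2) = (1/(1+s))*(1+s)*(1-s) + (1/(1-s))*(1-s)*(1+s)"
      by metis
    also have "\<dots> = 2" using n by simp
    finally show ?thesis .
  qed
  show ?thesis unfolding N0_def
    using assms by (auto intro!: derivative_eq_intros, simp only: k, simp add: diff_divide_distrib)
qed

lemma log_ratio_bounds:
  fixes s :: real
  assumes "0 \<le> s" "s < 1"
  shows "0 \<le> ln (1+s) - ln (1-s) \<and> (s \<le> 1/2 \<longrightarrow> ln (1+s) - ln (1-s) \<le> 3 * s)"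
proof -
  have a: "ln (1-s) \<le> ln (1+s)" using assms by (intro ln_mono) auto
  have "s \<le> 1/2 \<longrightarrow> ln (1+s) - ln (1-s) \<le> 3 * s"
  proof
    assume h: "s \<le> 1/2"
    have b: "ln (1+s) \<le> s" using assms by (intro ln_add_one_self_le_self) auto
    have "- ln (1-s) = ln (1/(1-s))" using assms by (simp add: ln_div)
    also have "\<dots> \<le> 1/(1-s) - 1" using assms by (intro ln_le_minus_one) auto
    also have "\<dots> = s/(1-s)" using assms by (simp add: field_simps)
    also have "\<dots> \<le> s/(1/2)" using assms h by (intro divide_left_mono) auto
    finally show "ln (1+s) - ln (1-s) \<le> 3 * s" using b by simp
  qed
  with a show ?thesis by simp
qed

lemma N0_bounds:
  assumes "0 < s" "s < 1"
  shows "0 \<le> N0 s \<and> (s \<le> 1/2 \<longrightarrow> N0 s \<le> 3 * s^3)"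
proof -
  obtain z where z: "0 < z" "z < s" "N0 s - N0 0 = (s - 0) * (z * (ln (1+z) - ln (1-z)))"
    using MVT2[of 0 s N0 "\<lambda>z. z * (ln (1+z) - ln (1-z))"] N0_deriv assms by force
  have G00: "N0 0 = 0" by (simp add: N0_def)
  have q: "N0 s = s * z * (ln (1+z) - ln (1-z))" using z G00 by simp
  have lb: "0 \<le> ln (1+z) - ln (1-z) \<and> (z \<le> 1/2 \<longrightarrow> ln (1+z) - ln (1-z) \<le> 3 * z)"
    using log_ratio_bounds[of z] z assms by simp
  have A: "0 \<le> N0 s" unfolding q using lb z assms by simp
  have "s \<le> 1/2 \<longrightarrow> N0 s \<le> 3 * s^3"
  proof
    assume h: "s \<le> 1/2"
    have "ln (1+z) - ln (1-z) \<le> 3 * s" using lb z h by auto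
    then have "s * z * (ln (1+z) - ln (1-z)) \<le> s * z * (3 * s)" using z assms by (intro mult_left_mono) auto
    also have "\<dots> \<le> s * s * (3 * s)" using z assms by (intro mult_right_mono mult_left_mono) auto
    finally show "N0 s \<le> 3 * s^3" unfolding q by (simp add: power3_eq_cube)
  qed
  with A show ?thesis by simp
qed

lemma F1_raw_zero_inner_bounds:
  assumes "0 < s" "s < 1"
  shows "0 \<le> F1_raw 0 s \<and> F1_raw 0 s \<le> 4 * s^2"
proof -
  have v: "F1_raw 0 s = N0 s / s"
  proof -
    have "\<bar>(s+1)/(s-1)\<bar> = (1+s)/(1-s)" using assms by (simp add: abs_divide field_simps)
    then have "F1_raw 0 s = 1 - (1 - s^2)/(2 * s) * ln ((1+s)/(1-s))" by (simp add: F1_raw_def)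
    also have "ln ((1+s)/(1-s)) = ln (1+s) - ln (1-s)" using assms by (simp add: ln_div)
    finally show ?thesis unfolding N0_def using assms by (simp add: field_simps)
  qed
  have N0: "0 \<le> N0 s \<and> (s \<le> 1/2 \<longrightarrow> N0 s \<le> 3 * s^3)" using N0_bounds assms by simp
  have "F1_raw 0 s \<le> 4 * s^2"
  proof (cases "s \<le> 1/2")
    case True
    then have "N0 s / s \<le> 3 * s^3 / s" using N0 assms by (intro divide_right_mono) auto
    also have "\<dots> = 3 * s^2" using assms by (simp add: power3_eq_cube power2_eq_square)
    also have "\<dots> \<le> 4 * s^2" by simp
    finally show ?thesis unfolding v .
  next
    case False
    have "0 \<le> (1 - s^2) / (2 * s) * (ln (1+s) - ln (1-s))"
      using assms log_ratio_bounds[of s] by (simp add: abs_square_le_1)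
    then have "F1_raw 0 s \<le> 1" unfolding v N0_def using assms by (simp add: field_simps)
    also have "\<dots> \<le> 4 * s^2" using False power_mono[of "1/2" s 2] by (simp add: power2_eq_square)
    finally show ?thesis .
  qed
  moreover have "0 \<le> F1_raw 0 s" unfolding v using N0 assms by simp
  ultimately show ?thesis by simp
qed

lemma F1_raw_zero_outer_bounds:
  assumes "1 < s"
  shows "0 \<le> F1_raw 0 s \<and> F1_raw 0 s \<le> 3"
proof -
  have v: "F1_raw 0 s = 1 + (s^2 - 1) / (2 * s) * ln ((s+1)/(s-1))"
    using assms by (simp add: F1_raw_def field_simps)
  have p: "0 \<le> (s^2 - 1) / (2 * s)" using assms by (simp add: abs_square_le_1[symmetric] less_imp_le)
  have "ln ((s+1)/(s-1)) \<le> (s+1)/(s-1) - 1" using assms by (intro ln_le_minus_one) auto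
  also have "\<dots> = 2 / (s-1)" using assms by (simp add: field_simps)
  finally have "(s^2 - 1) / (2 * s) * ln ((s+1)/(s-1)) \<le> (s^2 - 1) / (2 * s) * (2 / (s-1))"
    using p by (intro mult_left_mono) auto
  also have "\<dots> = (s+1) / s" using assms by (simp add: field_simps power2_eq_square)
  also have "\<dots> \<le> 2" using assms by (simp add: pos_divide_le_eq)
  finally have "F1_raw 0 s \<le> 3" unfolding v by simp
  moreover have "0 \<le> (s^2 - 1) / (2 * s) * ln ((s+1)/(s-1))" using assms p by simp
  ultimately show ?thesis unfolding v by linarith
qed

lemma F1_bounds_zero: "0 \<le> F1 0 t \<and> F1 0 t \<le> 4 * min 1 (t^2)"
proof -
  consider "t = 0" | "\<bar>t\<bar> = 1" | "0 < \<bar>t\<bar>" "\<bar>t\<bar> < 1" | "1 < \<bar>t\<bar>" by linarith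
  then show ?thesis
  proof cases
    case 2
    then have "min 1 (t^2) = 1" by (simp add: abs_square_eq_1[symmetric])
    then show ?thesis using 2 by (simp add: F1_def)
  next
    case 3
    then have "min 1 (t^2) = \<bar>t\<bar>^2" by (simp add: abs_square_le_1)
    then show ?thesis using 3 F1_raw_zero_inner_bounds[of "\<bar>t\<bar>"] by (simp add: F1_def)
  next
    case 4
    then have "min 1 (t^2) = 1" using one_le_power[of "\<bar>t\<bar>" 2] by (simp add: min_def)
    then show ?thesis using 4 F1_raw_zero_outer_bounds[of "\<bar>t\<bar>"] by (simp add: F1_def)
  qed (simp add: F1_def)
qed

definition F1_const :: "real \<Rightarrow> real" where
  "F1_const c = (if c = 0 then 4 else 400 / (\<bar>c\<bar> * (1+c)))"

lemma F1_const_pos: "-1 < c \<Longrightarrow> 0 < F1_const c"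
  by (simp add: F1_const_def)

lemma F1_nonneg: "-1 < c \<Longrightarrow> c < 1 \<Longrightarrow> 0 \<le> F1 c t"
  using F1_bounds_zero F1_bounds_nonzero by (cases "c = 0") auto

lemma F1_le_const: "-1 < c \<Longrightarrow> c < 1 \<Longrightarrow> F1 c t \<le> F1_const c * min 1 (t^2)"
  using F1_bounds_zero F1_bounds_nonzero by (cases "c = 0") (auto simp: F1_const_def)

lemma borel_measurable_F1: "F1 c \<in> borel_measurable borel"
  unfolding F1_def[abs_def] F1_raw_def by measurable

section \<open>Right slopes of convex functions\<close>

text \<open>For \<open>G\<close> convex on \<open>{0..}\<close> and \<open>s > 0\<close> the difference quotients decrease as
  \<open>h \<rightarrow> 0\<close> and are bounded below by the chord from \<open>0\<close> to \<open>s\<close>, so the infimum is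
  the right derivative of \<open>G\<close> at \<open>s\<close>.\<close>

definition right_slope :: "(real \<Rightarrow> real) \<Rightarrow> real \<Rightarrow> real" where
  "right_slope G s = (INF h\<in>{0<..}. (G (s + h) - G s) / h)"

lemma convex_on_chord_slope_mono:
  fixes G :: "real \<Rightarrow> real"
  assumes G: "convex_on {0..} G" and "0 \<le> a" "a < b" "a \<le> c" "c < d" "b \<le> d"
  shows "(G b - G a) / (b - a) \<le> (G d - G c) / (d - c)"
proof -
  have flip: "(G x - G y) / (x - y) = (G y - G x) / (y - x)" for x y
    by (metis minus_diff_eq minus_divide_divide)
  have "(G b - G a) / (b - a) \<le> (G d - G a) / (d - a)"
    using convex_on_slope_le(1)[OF G, of a d b] assms by (cases "b = d") (auto simp: flip)
  also have "\<dots> \<le> (G d - G c) / (d - c)"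
    using convex_on_slope_le(2)[OF G, of a d c] assms by (cases "a = c") (auto simp: flip)
  finally show ?thesis .
qed

context
  fixes G :: "real \<Rightarrow> real"
  assumes G: "convex_on {0..} G"
begin

lemma right_slope_le_chord:
  assumes "0 < s" "0 < h"
  shows "right_slope G s \<le> (G (s + h) - G s) / h"
  unfolding right_slope_def
proof (rule cINF_lower)
  show "bdd_below ((\<lambda>h. (G (s + h) - G s) / h) ` {0<..})"
  proof (rule bdd_belowI2)
    fix h :: real assume "h \<in> {0<..}"
    then show "(G s - G 0) / s \<le> (G (s + h) - G s) / h"
      using convex_on_chord_slope_mono[OF G, of 0 s s "s + h"] assms by simp
  qed
qed (use assms in simp)

lemma chord_le_right_slope:
  assumes "0 \<le> u" "u < s"
  shows "(G s - G u) / (s - u) \<le> right_slope G s"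
  unfolding right_slope_def
proof (rule cINF_greatest)
  fix h :: real assume "h \<in> {0<..}"
  then show "(G s - G u) / (s - u) \<le> (G (s + h) - G s) / h"
    using convex_on_chord_slope_mono[OF G, of u s s "s + h"] assms by simp
qed simp

lemma mono_on_right_slope: "mono_on {0<..} (right_slope G)"
proof (rule mono_onI)
  fix u s :: real assume "u \<in> {0<..}" "s \<in> {0<..}" "u \<le> s"
  then show "right_slope G u \<le> right_slope G s"
    using right_slope_le_chord[of u "s - u"] chord_le_right_slope[of u s]
    by (cases "u = s") auto
qed

lemma has_real_derivative_right_slope:
  assumes s: "0 < s" and cont: "isCont (right_slope G) s"
  shows "(G has_real_derivative right_slope G s) (at s)"
  unfolding has_field_derivative_iff
proof (rule tendsto_sandwich[where f = "\<lambda>y. min (right_slope G s) (right_slope G y)"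
                             and h = "\<lambda>y. max (right_slope G s) (right_slope G y)"])
  have near: "eventually (\<lambda>y. 0 < y \<and> y \<noteq> s) (at s)"
    unfolding eventually_at using s by (intro exI[of _ s]) (auto simp: dist_real_def)
  have flip: "(G y - G s) / (y - s) = (G s - G y) / (s - y)" for y
    by (metis minus_diff_eq minus_divide_divide)
  show "eventually (\<lambda>y. min (right_slope G s) (right_slope G y) \<le> (G y - G s) / (y - s)) (at s)"
    using near
  proof eventually_elim
    case (elim y)
    then show ?case
      using right_slope_le_chord[of s "y - s"] right_slope_le_chord[of y "s - y"] s
      by (cases "s < y") (auto simp: flip)
  qed
  show "eventually (\<lambda>y. (G y - G s) / (y - s) \<le> max (right_slope G s) (right_slope G y)) (at s)"
    using near
  proof eventually_elim
    case (elim y)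
    then show ?case
      using chord_le_right_slope[of s y] chord_le_right_slope[of y s] s
      by (cases "s < y") (auto simp: flip)
  qed
  have "(right_slope G \<longlongrightarrow> right_slope G s) (at s)"
    using cont by (simp add: isCont_def)
  then show "((\<lambda>y. min (right_slope G s) (right_slope G y)) \<longlongrightarrow> right_slope G s) (at s)"
    and "((\<lambda>y. max (right_slope G s) (right_slope G y)) \<longlongrightarrow> right_slope G s) (at s)"
    by (auto intro!: tendsto_eq_intros)
qed

lemma countable_discont_right_slope_sq:
  "countable {\<xi>. 0 < \<xi> \<and> \<not> isCont (right_slope G) (\<xi>^2)}"
proof -
  have "countable {s\<in>{0<..}. \<not> isCont (right_slope G) s}"
    by (rule mono_on_ctble_discont_open[OF _ mono_on_right_slope]) auto
  moreover have "{\<xi>. 0 < \<xi> \<and> \<not> isCont (right_slope G) (\<xi>^2)}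
      \<subseteq> sqrt ` {s\<in>{0<..}. \<not> isCont (right_slope G) s}"
  proof
    fix \<xi> assume "\<xi> \<in> {\<xi>. 0 < \<xi> \<and> \<not> isCont (right_slope G) (\<xi>^2)}"
    then show "\<xi> \<in> sqrt ` {s\<in>{0<..}. \<not> isCont (right_slope G) s}"
      by (intro image_eqI[of \<xi> sqrt "\<xi>^2"]) auto
  qed
  ultimately show ?thesis by (auto intro: countable_subset)
qed

lemma borel_measurable_right_slope_sq:
  "(\<lambda>\<xi>. indicator {0<..} \<xi> * right_slope G (\<xi>^2)) \<in> borel_measurable borel"
proof -
  have "mono_on {0<..} (\<lambda>\<xi>::real. right_slope G (\<xi>^2))"
    using mono_onD[OF mono_on_right_slope] by (intro mono_onI) (auto intro: power_mono)
  then have "(\<lambda>\<xi>. right_slope G (\<xi>^2)) \<in> borel_measurable (restrict_space borel {0<..})"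
    by (rule borel_measurable_mono_on_fnc)
  then show ?thesis by (subst (asm) borel_measurable_restrict_space_iff) auto
qed

end

text \<open>A right slope lies between the chords to its left and to its right, and chords converge
  pointwise; at a continuity point of the limit's right slope this squeezes the right slopes.\<close>

lemma eventually_right_slope_less:
  assumes G: "convex_on {0..} G" and Gs: "\<And>n. convex_on {0..} (Gs n)"
    and lim: "\<And>x. 0 \<le> x \<Longrightarrow> (\<lambda>n. Gs n x) \<longlonglongrightarrow> G x"
    and s: "0 < s" and cont: "isCont (right_slope G) s" and y: "right_slope G s < y"
  shows "eventually (\<lambda>n. right_slope (Gs n) s < y) sequentially"
proof -
  obtain d where d: "0 < d" "\<And>t. t \<noteq> s \<Longrightarrow> dist t s < d \<Longrightarrow> right_slope G t < y"
    using order_tendstoD(2)[OF cont[unfolded isCont_def] y] unfolding eventually_at by auto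
  define h where "h = d / 2"
  have h: "0 < h" "right_slope G (s + h) < y"
    using d unfolding h_def by (auto simp: dist_real_def)
  have "(G (s + h) - G s) / h < y"
    using chord_le_right_slope[OF G, of s "s + h"] s h by simp
  moreover have "(\<lambda>n. (Gs n (s + h) - Gs n s) / h) \<longlonglongrightarrow> (G (s + h) - G s) / h"
    unfolding divide_inverse using s h by (intro tendsto_mult_right tendsto_diff lim) auto
  ultimately have "eventually (\<lambda>n. (Gs n (s + h) - Gs n s) / h < y) sequentially"
    by (rule order_tendstoD(2)[rotated])
  then show ?thesis
  proof eventually_elim
    case (elim n)
    then show ?case using right_slope_le_chord[OF Gs[of n], of s h] s h by simp
  qed
qed

lemma eventually_right_slope_greater:
  assumes G: "convex_on {0..} G" and Gs: "\<And>n. convex_on {0..} (Gs n)"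
    and lim: "\<And>x. 0 \<le> x \<Longrightarrow> (\<lambda>n. Gs n x) \<longlonglongrightarrow> G x"
    and s: "0 < s" and cont: "isCont (right_slope G) s" and y: "y < right_slope G s"
  shows "eventually (\<lambda>n. y < right_slope (Gs n) s) sequentially"
proof -
  obtain d where d: "0 < d" "\<And>t. t \<noteq> s \<Longrightarrow> dist t s < d \<Longrightarrow> y < right_slope G t"
    using order_tendstoD(1)[OF cont[unfolded isCont_def] y] unfolding eventually_at by auto
  define h where "h = min (d / 2) (s / 2)"
  have h: "0 < h" "h < s" "y < right_slope G (s - h)"
    using d s unfolding h_def by (auto simp: dist_real_def)
  have "y < (G s - G (s - h)) / h"
    using right_slope_le_chord[OF G, of "s - h" h] h by simp
  moreover have "(\<lambda>n. (Gs n s - Gs n (s - h)) / h) \<longlonglongrightarrow> (G s - G (s - h)) / h"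
    unfolding divide_inverse using h by (intro tendsto_mult_right tendsto_diff lim) auto
  ultimately have "eventually (\<lambda>n. y < (Gs n s - Gs n (s - h)) / h) sequentially"
    by (rule order_tendstoD(1)[rotated])
  then show ?thesis
  proof eventually_elim
    case (elim n)
    then show ?case using chord_le_right_slope[OF Gs[of n], of "s - h" s] h by simp
  qed
qed

lemma right_slope_tendsto:
  assumes G: "convex_on {0..} G" and Gs: "\<And>n. convex_on {0..} (Gs n)"
    and lim: "\<And>x. 0 \<le> x \<Longrightarrow> (\<lambda>n. Gs n x) \<longlonglongrightarrow> G x"
    and s: "0 < s" and cont: "isCont (right_slope G) s"
  shows "(\<lambda>n. right_slope (Gs n) s) \<longlonglongrightarrow> right_slope G s"
proof (rule order_tendstoI)
  show "eventually (\<lambda>n. right_slope (Gs n) s < y) sequentially" if "right_slope G s < y" for y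
    by (rule eventually_right_slope_less[OF G Gs lim s cont that])
  show "eventually (\<lambda>n. y < right_slope (Gs n) s) sequentially" if "y < right_slope G s" for y
    by (rule eventually_right_slope_greater[OF G Gs lim s cont that])
qed

section \<open>Properties of \<open>V1\<close>\<close>

lemma V1_continuous: "f \<in> V1 \<alpha> \<Longrightarrow> continuous_on UNIV f"
  by (simp add: V1_def V0_def)

lemma V1_antimono: "f \<in> V1 \<alpha> \<Longrightarrow> 0 \<le> x \<Longrightarrow> x \<le> y \<Longrightarrow> f y \<le> f x"
  by (simp add: V1_def)

lemma V1_lower_bound: "f \<in> V1 \<alpha> \<Longrightarrow> max 0 (1 - x^2) \<le> f x"
  by (simp add: V1_def)

lemma V1_le_one:
  assumes "f \<in> V1 \<alpha>"
  shows "f x \<le> 1"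
proof -
  have "f \<bar>x\<bar> = f x" using assms by (cases "0 \<le> x") (auto simp: V1_def V0_def)
  moreover have "f \<bar>x\<bar> \<le> f 0" using V1_antimono[OF assms, of 0 "\<bar>x\<bar>"] by simp
  ultimately show ?thesis using assms by (simp add: V1_def)
qed

lemma V1_convex_sqrt: "f \<in> V1 \<alpha> \<Longrightarrow> convex_on {0..} (\<lambda>s. f (sqrt s))"
  by (simp add: V1_def)

lemma V1_diff_bounded: "g \<in> V1 \<alpha> \<Longrightarrow> f \<in> V1 \<alpha> \<Longrightarrow> \<bar>g x - f x\<bar> \<le> 1"
  using V1_lower_bound[of g \<alpha> x] V1_lower_bound[of f \<alpha> x] V1_le_one[of g \<alpha> x] V1_le_one[of f \<alpha> x] by auto

text \<open>Writing \<open>f x = G (x^2)\<close> with \<open>G\<close> convex, the right derivative of \<open>f\<close> is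
  \<open>2 x\<close> times the right slope of \<open>G\<close> at \<open>x^2\<close>; it agrees with \<open>deriv f\<close>
  off a countable set.\<close>

definition right_deriv :: "(real \<Rightarrow> real) \<Rightarrow> real \<Rightarrow> real" where
  "right_deriv f x = 2 * x * right_slope (\<lambda>s. f (sqrt s)) (x^2)"

lemma right_slope_sqrt_bounds:
  assumes f: "f \<in> V1 \<alpha>" and s: "0 < s"
  shows "right_slope (\<lambda>s. f (sqrt s)) s \<le> 0" "-1 \<le> right_slope (\<lambda>s. f (sqrt s)) s"
    "-2 / s \<le> right_slope (\<lambda>s. f (sqrt s)) s"
proof -
  note convex = V1_convex_sqrt[OF f]
  have "f (sqrt (s + 1)) \<le> f (sqrt s)" using V1_antimono[OF f, of "sqrt s" "sqrt (s + 1)"] s by simp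
  then show "right_slope (\<lambda>s. f (sqrt s)) s \<le> 0"
    using right_slope_le_chord[OF convex s, of 1] by simp
  have "1 - s \<le> f (sqrt s)" using V1_lower_bound[OF f, of "sqrt s"] s by simp
  then have "-1 \<le> (f (sqrt s) - f (sqrt 0)) / (s - 0)"
    using s f by (simp add: V1_def field_simps)
  then show "-1 \<le> right_slope (\<lambda>s. f (sqrt s)) s"
    using chord_le_right_slope[OF convex, of 0 s] s by simp
  have "-1 \<le> f (sqrt s) - f (sqrt (s/2))"
    using V1_lower_bound[OF f, of "sqrt s"] V1_le_one[OF f, of "sqrt (s/2)"] by simp
  then have "-2 / s \<le> (f (sqrt s) - f (sqrt (s/2))) / (s - s/2)"
    using s by (simp add: field_simps)
  then show "-2 / s \<le> right_slope (\<lambda>s. f (sqrt s)) s"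
    using chord_le_right_slope[OF convex, of "s/2" s] s by simp
qed

lemma right_deriv_nonpos: "f \<in> V1 \<alpha> \<Longrightarrow> 0 < x \<Longrightarrow> right_deriv f x \<le> 0"
  using right_slope_sqrt_bounds(1)[of f \<alpha> "x^2"] by (simp add: right_deriv_def mult_nonneg_nonpos)

lemma abs_right_deriv_le:
  assumes f: "f \<in> V1 \<alpha>" and x: "0 < x"
  shows "\<bar>right_deriv f x\<bar> \<le> min (2 * x) (4 / x)"
proof -
  note bounds = right_slope_sqrt_bounds[OF f, of "x^2"]
  have "\<bar>right_deriv f x\<bar> = 2 * x * - right_slope (\<lambda>s. f (sqrt s)) (x^2)"
    using bounds(1) x by (simp add: right_deriv_def abs_mult)
  moreover have "2 * x * - right_slope (\<lambda>s. f (sqrt s)) (x^2) \<le> 2 * x * 1"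
    using bounds(2) x by (intro mult_left_mono) auto
  moreover have "2 * x * - right_slope (\<lambda>s. f (sqrt s)) (x^2) \<le> 2 * x * (2 / x^2)"
    using bounds(3) x by (intro mult_left_mono) auto
  moreover have "2 * x * (2 / x^2) = 4 / x" using x by (simp add: power2_eq_square)
  ultimately show ?thesis by simp
qed

lemma has_real_derivative_V1:
  assumes f: "f \<in> V1 \<alpha>" and x: "0 < x"
    and cont: "isCont (right_slope (\<lambda>s. f (sqrt s))) (x^2)"
  shows "(f has_real_derivative right_deriv f x) (at x)"
proof -
  have "((\<lambda>x. f (sqrt (x^2))) has_real_derivative right_slope (\<lambda>s. f (sqrt s)) (x^2) * (2 * x)) (at x)"
    using has_real_derivative_right_slope[OF V1_convex_sqrt[OF f] _ cont] x
    by (intro DERIV_chain2[of "\<lambda>s. f (sqrt s)"]) (auto intro!: derivative_eq_intros)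
  moreover have "(\<lambda>x. f (sqrt (x^2))) = f"
    using f by (auto simp: V1_def V0_def abs_if)
  ultimately show ?thesis by (simp add: right_deriv_def mult_ac)
qed

lemma borel_measurable_right_deriv:
  assumes "f \<in> V1 \<alpha>"
  shows "(\<lambda>x. indicator {0<..} x * right_deriv f x) \<in> borel_measurable borel"
proof -
  have "(\<lambda>x. 2 * x * (indicator {0<..} x * right_slope (\<lambda>s. f (sqrt s)) (x^2))) \<in> borel_measurable borel"
    using borel_measurable_right_slope_sq[OF V1_convex_sqrt[OF assms]] by measurable
  then show ?thesis by (simp add: right_deriv_def mult_ac)
qed

lemma right_deriv_tendsto:
  assumes f: "f \<in> V1 \<alpha>" and fs: "\<And>n. fs n \<in> V1 \<alpha>" and lim: "\<And>x. (\<lambda>n. fs n x) \<longlonglongrightarrow> f x"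
    and x: "0 < x" and cont: "isCont (right_slope (\<lambda>s. f (sqrt s))) (x^2)"
  shows "(\<lambda>n. right_deriv (fs n) x) \<longlonglongrightarrow> right_deriv f x"
  unfolding right_deriv_def
  using right_slope_tendsto[OF V1_convex_sqrt[OF f] V1_convex_sqrt[OF fs] lim _ cont] x
  by (intro tendsto_mult_left) simp

lemma eta_pos:
  assumes "0 < \<alpha>" "\<alpha> < 1"
  shows "0 < eta \<alpha>"
proof -
  have "0 < (1::real) + 4 powr \<alpha>" by (simp add: add_pos_pos)
  then show ?thesis using assms by (simp add: eta_def)
qed

lemma V1_half_lt_one:
  assumes \<alpha>: "0 < \<alpha>" "\<alpha> < 1" and f: "f \<in> V1 \<alpha>"
  shows "f (1/2) < 1"
proof (rule ccontr)
  assume "\<not> f (1/2) < 1"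
  then have half: "f (1/2) = 1" using V1_le_one[OF f, of "1/2"] by simp
  obtain L where L: "((\<lambda>x. (f x - f (1/2)) / (x - 1/2)) \<longlongrightarrow> L) (at_left (1/2))" "L \<le> - eta \<alpha>"
    using f unfolding V1_def by blast
  have "eventually (\<lambda>x. x \<in> {0<..<1/2}) (at_left (1/2::real))"
    by (rule eventually_at_left_real) simp
  then have "eventually (\<lambda>x. (f x - f (1/2)) / (x - 1/2) = 0) (at_left (1/2::real))"
  proof eventually_elim
    case (elim x)
    then have "f (1/2) \<le> f x" using V1_antimono[OF f, of x "1/2"] by simp
    then show ?case using half V1_le_one[OF f, of x] by simp
  qed
  then have "((\<lambda>x. (f x - f (1/2)) / (x - 1/2)) \<longlongrightarrow> 0) (at_left (1/2))"
    by (rule tendsto_eventually)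
  then have "L = 0" using L(1) tendsto_unique[OF trivial_limit_at_left_real] by blast
  then show False using L(2) eta_pos[OF \<alpha>] by simp
qed

section \<open>The weighted norm\<close>

lemma rho_pos: "0 < rho \<alpha> x"
  by (simp add: rho_def)

lemma rho_le_one: "0 \<le> \<alpha> \<Longrightarrow> rho \<alpha> x \<le> 1"
  by (simp add: rho_def powr_minus_divide ge_one_powr_ge_zero)

lemma rho_le:
  assumes \<alpha>: "0 < \<alpha>" and \<epsilon>: "0 < \<epsilon>" and x: "\<epsilon> powr (-1/\<alpha>) \<le> \<bar>x\<bar>"
  shows "rho \<alpha> x \<le> \<epsilon>"
proof -
  have "rho \<alpha> x \<le> (\<epsilon> powr (-1/\<alpha>)) powr (-\<alpha>)"
    unfolding rho_def using \<alpha> \<epsilon> x by (intro powr_mono2') auto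
  also have "\<dots> = \<epsilon>" using \<alpha> \<epsilon> by (simp add: powr_powr)
  finally show ?thesis .
qed

lemma abs_le_wnorm:
  assumes "0 \<le> \<alpha>" and bounded: "\<And>y. \<bar>h y\<bar> \<le> B"
  shows "\<bar>rho \<alpha> x * h x\<bar> \<le> wnorm \<alpha> h"
  unfolding wnorm_def
proof (rule cSUP_upper)
  show "bdd_above (range (\<lambda>y. \<bar>rho \<alpha> y * h y\<bar>))"
  proof (rule bdd_aboveI2)
    fix y
    have "\<bar>rho \<alpha> y * h y\<bar> = rho \<alpha> y * \<bar>h y\<bar>"
      using rho_pos[of \<alpha> y] by (simp add: abs_mult)
    also have "\<dots> \<le> 1 * B"
      using rho_le_one[OF assms(1)] rho_pos bounded[of y] by (intro mult_mono) auto
    finally show "\<bar>rho \<alpha> y * h y\<bar> \<le> B" by simp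
  qed
qed simp

lemma wnorm_le: "(\<And>x. \<bar>rho \<alpha> x * h x\<bar> \<le> b) \<Longrightarrow> wnorm \<alpha> h \<le> b"
  unfolding wnorm_def by (rule cSUP_least) auto

lemma wnorm_nonneg: "0 \<le> \<alpha> \<Longrightarrow> (\<And>y. \<bar>h y\<bar> \<le> B) \<Longrightarrow> 0 \<le> wnorm \<alpha> h"
  by (rule order_trans[OF abs_ge_zero abs_le_wnorm])

lemma wnorm_le_if_small_on_interval:
  assumes \<alpha>: "0 < \<alpha>" and \<epsilon>: "0 < \<epsilon>" and bounded: "\<And>x. \<bar>h x\<bar> \<le> 1"
    and small: "\<And>x. \<bar>x\<bar> \<le> \<epsilon> powr (-1/\<alpha>) \<Longrightarrow> \<bar>h x\<bar> \<le> \<epsilon>"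
  shows "wnorm \<alpha> h \<le> \<epsilon>"
proof (rule wnorm_le)
  fix x
  have "\<bar>rho \<alpha> x * h x\<bar> = rho \<alpha> x * \<bar>h x\<bar>" using rho_pos[of \<alpha> x] by (simp add: abs_mult)
  also have "\<dots> \<le> \<epsilon>"
  proof (cases "\<bar>x\<bar> \<le> \<epsilon> powr (-1/\<alpha>)")
    case True
    then have "rho \<alpha> x * \<bar>h x\<bar> \<le> 1 * \<epsilon>" using rho_le_one[of \<alpha> x] \<alpha> small by (intro mult_mono) auto
    then show ?thesis by simp
  next
    case False
    then have "rho \<alpha> x * \<bar>h x\<bar> \<le> \<epsilon> * 1" using rho_le[OF \<alpha> \<epsilon>, of x] bounded[of x] \<epsilon> by (intro mult_mono) auto
    then show ?thesis by simp
  qed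
  finally show "\<bar>rho \<alpha> x * h x\<bar> \<le> \<epsilon>" .
qed

lemma tendsto_if_wnorm_tendsto:
  assumes "0 \<le> \<alpha>" and bounded: "\<And>n y. \<bar>hs n y\<bar> \<le> B"
    and lim: "(\<lambda>n. wnorm \<alpha> (hs n)) \<longlonglongrightarrow> 0"
  shows "(\<lambda>n. hs n x) \<longlonglongrightarrow> 0"
proof (rule Lim_null_comparison)
  have "\<bar>hs n x\<bar> \<le> wnorm \<alpha> (hs n) / rho \<alpha> x" for n
  proof -
    have "\<bar>rho \<alpha> x * hs n x\<bar> \<le> wnorm \<alpha> (hs n)"
      by (rule abs_le_wnorm[OF assms(1) bounded])
    then show ?thesis using rho_pos[of \<alpha> x] by (simp add: abs_mult pos_le_divide_eq mult.commute)
  qed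
  then show "eventually (\<lambda>n. norm (hs n x) \<le> wnorm \<alpha> (hs n) / rho \<alpha> x) sequentially"
    by simp
  show "(\<lambda>n. wnorm \<alpha> (hs n) / rho \<alpha> x) \<longlonglongrightarrow> 0"
    using tendsto_divide_zero[OF lim] by simp
qed

section \<open>The operators \<open>T_op\<close>, \<open>c_f\<close> and \<open>R_op\<close>\<close>

lemma uniform_limit_of_tendsto: "(a \<longlongrightarrow> l) F \<Longrightarrow> uniform_limit S (\<lambda>n _. a n) (\<lambda>_. l) F"
  by (rule uniform_limitI) (auto simp: tendsto_iff)

context
  fixes \<alpha> :: real
  assumes alpha_pos: "0 < \<alpha>" and alpha_lt_1: "\<alpha> < 1"
begin

lemma c1_pos: "0 < c1 \<alpha>"
  using alpha_pos alpha_lt_1 Gamma_real_pos[of "1/2 + \<alpha>"] Gamma_real_pos[of "1 - \<alpha>"]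
  by (simp add: c1_def)

lemma F1_kernel_const_pos: "0 < F1_const (1 - 2*\<alpha>)"
  using alpha_lt_1 by (intro F1_const_pos) simp

definition majorant :: "real \<Rightarrow> real" where
  "majorant x = indicator {0..1} x * x powr (1 - 2*\<alpha>) + indicator {1..} x * x powr (-1 - 2*\<alpha>)"

lemma majorant_nonneg: "0 \<le> majorant x"
  by (simp add: majorant_def indicator_def)

lemma integrable_majorant: "integrable lborel majorant"
proof -
  have "integrable lebesgue (\<lambda>x. indicator {0..1} x *\<^sub>R x powr (1 - 2*\<alpha>))"
    using alpha_lt_1
    by (intro nonnegative_absolutely_integrable_1[unfolded set_integrable_def] integrable_on_powr_from_0) auto
  then have head: "integrable lborel (\<lambda>x. indicator {0..1} x * x powr (1 - 2*\<alpha>))"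
    by (subst (asm) integrable_completion) auto
  have "((\<lambda>x. x powr (-1 - 2*\<alpha>)) has_integral -(1 powr (-1 - 2*\<alpha> + 1)) / (-1 - 2*\<alpha> + 1)) {1..}"
    using alpha_pos by (intro has_integral_powr_to_inf) auto
  then have "integrable lebesgue (\<lambda>x. indicator {1..} x *\<^sub>R x powr (-1 - 2*\<alpha>))"
    by (intro nonnegative_absolutely_integrable_1[unfolded set_integrable_def]) auto
  then have tail: "integrable lborel (\<lambda>x. indicator {1..} x * x powr (-1 - 2*\<alpha>))"
    by (subst (asm) integrable_completion) auto
  show ?thesis unfolding majorant_def[abs_def] using head tail by (rule Bochner_Integration.integrable_add)
qed

lemma min_sq_div_powr_le_majorant:
  assumes "0 < x"
  shows "min 1 (x^2) / x powr (1 + 2*\<alpha>) \<le> majorant x"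
proof (cases "x \<le> 1")
  case True
  then have "min 1 (x^2) / x powr (1 + 2*\<alpha>) = x powr 2 / x powr (1 + 2*\<alpha>)"
    using assms by (simp add: power_le_one powr_realpow)
  also have "\<dots> = x powr (1 - 2*\<alpha>)" by (simp add: powr_diff[symmetric])
  finally show ?thesis using True assms by (simp add: majorant_def)
next
  case False
  then have "min 1 (x^2) / x powr (1 + 2*\<alpha>) = x powr (-1 - 2*\<alpha>)"
    using assms by (simp add: powr_minus_divide[symmetric])
  then show ?thesis using False by (simp add: majorant_def)
qed

definition kernel_weight :: "real \<Rightarrow> real \<Rightarrow> real" where
  "kernel_weight M \<xi> = \<xi> powr (2 - 2*\<alpha>) * min 1 (M^2 / \<xi>^2)"

lemma kernel_weight_nonneg: "0 \<le> kernel_weight M \<xi>"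
  by (simp add: kernel_weight_def)

lemma kernel_weight_le_majorant:
  assumes \<xi>: "0 < \<xi>" and m: "0 \<le> m" "m \<le> min (2 * \<xi>) (4 / \<xi>)"
  shows "m * kernel_weight M \<xi> \<le> 4 * (1 + M^2) * majorant \<xi>"
proof (cases "\<xi> \<le> 1")
  case True
  have "m * kernel_weight M \<xi> \<le> (2 * \<xi>) * (\<xi> powr (2 - 2*\<alpha>) * 1)"
    unfolding kernel_weight_def using m by (intro mult_mono mult_left_mono) auto
  also have "\<dots> = 2 * \<xi>^2 * \<xi> powr (1 - 2*\<alpha>)"
    using \<xi> powr_add[of \<xi> 1 "1 - 2*\<alpha>"] by (simp add: power2_eq_square)
  also have "\<dots> \<le> 2 * 1 * \<xi> powr (1 - 2*\<alpha>)"
    using True \<xi> by (intro mult_right_mono mult_left_mono) (auto simp: power_le_one)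
  also have "\<dots> \<le> 4 * (1 + M^2) * majorant \<xi>"
  proof (rule mult_mono)
    show "\<xi> powr (1 - 2*\<alpha>) \<le> majorant \<xi>" using True \<xi> by (simp add: majorant_def)
    show "2 * 1 \<le> 4 * (1 + M^2)" by simp
  qed simp_all
  finally show ?thesis .
next
  case False
  have "m * kernel_weight M \<xi> \<le> (4 / \<xi>) * (\<xi> powr (2 - 2*\<alpha>) * (M^2 / \<xi>^2))"
    unfolding kernel_weight_def using m by (intro mult_mono mult_left_mono) auto
  also have "\<dots> = 4 * M^2 * \<xi> powr (-1 - 2*\<alpha>)"
  proof -
    have "\<xi> powr (2 - 2*\<alpha>) = \<xi> powr 3 * \<xi> powr (-1 - 2*\<alpha>)"
      by (simp add: powr_add[symmetric])
    also have "\<xi> powr 3 = \<xi>^3" using \<xi> by simp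
    finally have "\<xi> powr (2 - 2*\<alpha>) = \<xi>^3 * \<xi> powr (-1 - 2*\<alpha>)" .
    then show ?thesis using \<xi> by (simp add: field_simps power2_eq_square power3_eq_cube)
  qed
  also have "\<dots> \<le> 4 * (1 + M^2) * majorant \<xi>"
    using False by (intro mult_mono) (auto simp: majorant_def)
  finally show ?thesis .
qed

lemma F1_kernel_nonneg: "0 \<le> F1 (1 - 2*\<alpha>) t"
  using alpha_pos alpha_lt_1 by (intro F1_nonneg) auto

lemma F1_scaled_bounds:
  assumes "0 < \<xi>" "\<bar>x\<bar> \<le> M"
  shows "0 \<le> \<xi> powr (2 - 2*\<alpha>) * F1 (1 - 2*\<alpha>) (x / \<xi>)"
    and "\<xi> powr (2 - 2*\<alpha>) * F1 (1 - 2*\<alpha>) (x / \<xi>) \<le> F1_const (1 - 2*\<alpha>) * kernel_weight M \<xi>"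
proof -
  have c: "-1 < 1 - 2*\<alpha>" "1 - 2*\<alpha> < 1" using alpha_pos alpha_lt_1 by auto
  show "0 \<le> \<xi> powr (2 - 2*\<alpha>) * F1 (1 - 2*\<alpha>) (x / \<xi>)" using F1_nonneg[OF c] by simp
  have "(x / \<xi>)^2 \<le> M^2 / \<xi>^2"
    using assms abs_le_square_iff[of x M] by (simp add: power_divide divide_right_mono)
  then have "F1 (1 - 2*\<alpha>) (x / \<xi>) \<le> F1_const (1 - 2*\<alpha>) * min 1 (M^2 / \<xi>^2)"
    using F1_le_const[OF c, of "x / \<xi>"] F1_kernel_const_pos
    by (smt (verit, best) min.mono mult_left_mono)
  then have "\<xi> powr (2 - 2*\<alpha>) * F1 (1 - 2*\<alpha>) (x / \<xi>)
      \<le> \<xi> powr (2 - 2*\<alpha>) * (F1_const (1 - 2*\<alpha>) * min 1 (M^2 / \<xi>^2))"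
    by (rule mult_left_mono) simp
  then show "\<xi> powr (2 - 2*\<alpha>) * F1 (1 - 2*\<alpha>) (x / \<xi>) \<le> F1_const (1 - 2*\<alpha>) * kernel_weight M \<xi>"
    unfolding kernel_weight_def by (simp add: mult_ac)
qed

definition T_integrand :: "(real \<Rightarrow> real) \<Rightarrow> real \<Rightarrow> real \<Rightarrow> real" where
  "T_integrand f x \<xi> =
     indicator {0<..} \<xi> * right_deriv f \<xi> * (\<xi> powr (2 - 2*\<alpha>) * F1 (1 - 2*\<alpha>) (x / \<xi>))"

lemma borel_measurable_T_integrand:
  assumes "f \<in> V1 \<alpha>"
  shows "T_integrand f x \<in> borel_measurable borel"
proof -
  have "(\<lambda>\<xi>. F1 (1 - 2*\<alpha>) (x / \<xi>)) \<in> borel_measurable borel"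
    by (rule measurable_compose[OF _ borel_measurable_F1]) simp
  then show ?thesis
    unfolding T_integrand_def[abs_def] using borel_measurable_right_deriv[OF assms] by measurable
qed

lemma abs_T_integrand_le:
  assumes f: "f \<in> V1 \<alpha>" and x: "\<bar>x\<bar> \<le> M"
  shows "\<bar>T_integrand f x \<xi>\<bar> \<le> F1_const (1 - 2*\<alpha>) * (4 * (1 + M^2) * majorant \<xi>)"
proof (cases "0 < \<xi>")
  case True
  note F1 = F1_scaled_bounds[OF True x]
  have "\<bar>T_integrand f x \<xi>\<bar> = \<bar>right_deriv f \<xi>\<bar> * (\<xi> powr (2 - 2*\<alpha>) * F1 (1 - 2*\<alpha>) (x / \<xi>))"
    using True F1_kernel_nonneg by (simp add: T_integrand_def abs_mult)
  also have "\<dots> \<le> \<bar>right_deriv f \<xi>\<bar> * (F1_const (1 - 2*\<alpha>) * kernel_weight M \<xi>)"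
    using F1(2) by (rule mult_left_mono) simp
  also have "\<dots> = F1_const (1 - 2*\<alpha>) * (\<bar>right_deriv f \<xi>\<bar> * kernel_weight M \<xi>)" by simp
  also have "\<dots> \<le> F1_const (1 - 2*\<alpha>) * (4 * (1 + M^2) * majorant \<xi>)"
    using kernel_weight_le_majorant[OF True _ abs_right_deriv_le[OF f True]] F1_kernel_const_pos
    by (intro mult_left_mono) auto
  finally show ?thesis .
qed (use F1_kernel_const_pos majorant_nonneg in \<open>simp add: T_integrand_def\<close>)

lemma integrable_T_integrand:
  assumes f: "f \<in> V1 \<alpha>"
  shows "integrable lborel (T_integrand f x)"
proof (rule Bochner_Integration.integrable_bound)
  show "integrable lborel (\<lambda>\<xi>. F1_const (1 - 2*\<alpha>) * (4 * (1 + \<bar>x\<bar>^2) * majorant \<xi>))"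
    using integrable_majorant by simp
  show "T_integrand f x \<in> borel_measurable lborel"
    using borel_measurable_T_integrand[OF f] by simp
  show "AE \<xi> in lborel. norm (T_integrand f x \<xi>)
      \<le> norm (F1_const (1 - 2*\<alpha>) * (4 * (1 + \<bar>x\<bar>^2) * majorant \<xi>))"
    using abs_T_integrand_le[OF f, of x "\<bar>x\<bar>"] F1_kernel_const_pos majorant_nonneg by (intro AE_I2) simp
qed

text \<open>\<open>T_op\<close> integrates \<open>deriv f\<close>, which is an arbitrary value where \<open>f\<close> is not
  differentiable; those points form a countable set, hence a null set.\<close>

lemma T_op_eq_integral:
  assumes f: "f \<in> V1 \<alpha>"
  shows "T_op \<alpha> f x = c1 \<alpha> * integral\<^sup>L lborel (T_integrand f x)"
proof -
  have "integral\<^sup>L lborel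
          (\<lambda>\<xi>. indicator {0<..} \<xi> *\<^sub>R (deriv f \<xi> * \<xi> powr (2 - 2*\<alpha>) * F1 (1 - 2*\<alpha>) (x / \<xi>)))
      = integral\<^sup>L lborel (T_integrand f x)"
  proof (rule integral_discrete_difference[OF countable_discont_right_slope_sq[OF V1_convex_sqrt[OF f]]])
    fix \<xi> assume "\<xi> \<notin> {\<xi>. 0 < \<xi> \<and> \<not> isCont (right_slope (\<lambda>s. f (sqrt s))) (\<xi>^2)}"
    then show "indicator {0<..} \<xi> *\<^sub>R (deriv f \<xi> * \<xi> powr (2 - 2*\<alpha>) * F1 (1 - 2*\<alpha>) (x / \<xi>))
        = T_integrand f x \<xi>"
    proof (cases "0 < \<xi>")
      case True
      with \<open>\<xi> \<notin> _\<close> have "deriv f \<xi> = right_deriv f \<xi>"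
        using has_real_derivative_V1[OF f True] by (intro DERIV_imp_deriv) simp
      then show ?thesis using True by (simp add: T_integrand_def)
    qed (simp add: T_integrand_def)
  qed auto
  then show ?thesis unfolding T_op_def set_lebesgue_integral_def by simp
qed

lemma T_op_nonpos:
  assumes f: "f \<in> V1 \<alpha>"
  shows "T_op \<alpha> f x \<le> 0"
proof -
  have "T_integrand f x \<xi> \<le> 0" for \<xi>
    using right_deriv_nonpos[OF f] F1_scaled_bounds(1)[of \<xi> x "\<bar>x\<bar>"]
    by (cases "0 < \<xi>") (auto simp: T_integrand_def mult_nonpos_nonneg)
  then have "0 \<le> integral\<^sup>L lborel (\<lambda>\<xi>. - T_integrand f x \<xi>)"
    by (intro Bochner_Integration.integral_nonneg) simp
  then have "integral\<^sup>L lborel (T_integrand f x) \<le> 0" by simp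
  then show ?thesis unfolding T_op_eq_integral[OF f] by (rule mult_nonneg_nonpos[OF less_imp_le[OF c1_pos]])
qed

lemma abs_T_op_le:
  assumes f: "f \<in> V1 \<alpha>" and x: "\<bar>x\<bar> \<le> M"
  shows "\<bar>T_op \<alpha> f x\<bar> \<le> c1 \<alpha> * (F1_const (1 - 2*\<alpha>) * (4 * (1 + M^2) * integral\<^sup>L lborel majorant))"
proof -
  have "\<bar>integral\<^sup>L lborel (T_integrand f x)\<bar> \<le> integral\<^sup>L lborel (\<lambda>\<xi>. \<bar>T_integrand f x \<xi>\<bar>)"
    by (rule integral_abs_bound)
  also have "\<dots> \<le> integral\<^sup>L lborel (\<lambda>\<xi>. F1_const (1 - 2*\<alpha>) * (4 * (1 + M^2) * majorant \<xi>))"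
    using integrable_T_integrand[OF f] integrable_majorant abs_T_integrand_le[OF f x]
    by (intro Bochner_Integration.integral_mono) auto
  finally show ?thesis
    unfolding T_op_eq_integral[OF f] using c1_pos by (simp add: abs_mult)
qed

definition deriv_gap :: "real \<Rightarrow> (real \<Rightarrow> real) \<Rightarrow> (real \<Rightarrow> real) \<Rightarrow> real \<Rightarrow> real" where
  "deriv_gap M g f \<xi> =
     \<bar>indicator {0<..} \<xi> * right_deriv g \<xi> - indicator {0<..} \<xi> * right_deriv f \<xi>\<bar> * kernel_weight M \<xi>"

lemma deriv_gap_le_majorant:
  assumes "g \<in> V1 \<alpha>" "f \<in> V1 \<alpha>"
  shows "deriv_gap M g f \<xi> \<le> 2 * (4 * (1 + M^2) * majorant \<xi>)"
proof (cases "0 < \<xi>")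
  case True
  have "deriv_gap M g f \<xi> \<le> (\<bar>right_deriv g \<xi>\<bar> + \<bar>right_deriv f \<xi>\<bar>) * kernel_weight M \<xi>"
    unfolding deriv_gap_def using True kernel_weight_nonneg by (intro mult_right_mono) auto
  also have "\<dots> \<le> 4 * (1 + M^2) * majorant \<xi> + 4 * (1 + M^2) * majorant \<xi>"
    unfolding distrib_right using assms[THEN abs_right_deriv_le, OF True]
    by (intro add_mono kernel_weight_le_majorant[OF True]) auto
  also have "\<dots> = 2 * (4 * (1 + M^2) * majorant \<xi>)" by simp
  finally show ?thesis .
qed (simp add: deriv_gap_def majorant_nonneg)

lemma integrable_deriv_gap:
  assumes g: "g \<in> V1 \<alpha>" and f: "f \<in> V1 \<alpha>"
  shows "integrable lborel (deriv_gap M g f)"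
proof (rule Bochner_Integration.integrable_bound)
  show "integrable lborel (\<lambda>\<xi>. 2 * (4 * (1 + M^2) * majorant \<xi>))"
    using integrable_majorant by simp
  show "deriv_gap M g f \<in> borel_measurable lborel"
    unfolding deriv_gap_def[abs_def] kernel_weight_def
    using borel_measurable_right_deriv[OF g] borel_measurable_right_deriv[OF f] by measurable
  show "AE \<xi> in lborel. norm (deriv_gap M g f \<xi>) \<le> norm (2 * (4 * (1 + M^2) * majorant \<xi>))"
    using deriv_gap_le_majorant[OF g f] majorant_nonneg
    by (intro AE_I2) (simp add: deriv_gap_def kernel_weight_nonneg)
qed

lemma abs_T_op_diff_le:
  assumes g: "g \<in> V1 \<alpha>" and f: "f \<in> V1 \<alpha>" and x: "\<bar>x\<bar> \<le> M"
  shows "\<bar>T_op \<alpha> g x - T_op \<alpha> f x\<bar>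
    \<le> c1 \<alpha> * (F1_const (1 - 2*\<alpha>) * integral\<^sup>L lborel (deriv_gap M g f))"
proof -
  have pointwise: "\<bar>T_integrand g x \<xi> - T_integrand f x \<xi>\<bar> \<le> F1_const (1 - 2*\<alpha>) * deriv_gap M g f \<xi>" for \<xi>
  proof (cases "0 < \<xi>")
    case True
    have "\<bar>T_integrand g x \<xi> - T_integrand f x \<xi>\<bar>
        = \<bar>right_deriv g \<xi> - right_deriv f \<xi>\<bar> * (\<xi> powr (2 - 2*\<alpha>) * F1 (1 - 2*\<alpha>) (x / \<xi>))"
      using True F1_kernel_nonneg by (simp add: T_integrand_def abs_mult left_diff_distrib[symmetric])
    also have "\<dots> \<le> \<bar>right_deriv g \<xi> - right_deriv f \<xi>\<bar> * (F1_const (1 - 2*\<alpha>) * kernel_weight M \<xi>)"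
      using F1_scaled_bounds(2)[OF True x] by (rule mult_left_mono) simp
    finally show ?thesis using True by (simp add: deriv_gap_def mult_ac)
  qed (simp add: T_integrand_def deriv_gap_def)
  have "\<bar>integral\<^sup>L lborel (\<lambda>\<xi>. T_integrand g x \<xi> - T_integrand f x \<xi>)\<bar>
      \<le> integral\<^sup>L lborel (\<lambda>\<xi>. \<bar>T_integrand g x \<xi> - T_integrand f x \<xi>\<bar>)"
    by (rule integral_abs_bound)
  also have "\<dots> \<le> integral\<^sup>L lborel (\<lambda>\<xi>. F1_const (1 - 2*\<alpha>) * deriv_gap M g f \<xi>)"
    using integrable_T_integrand[OF g] integrable_T_integrand[OF f] integrable_deriv_gap[OF g f] pointwise
    by (intro Bochner_Integration.integral_mono) auto
  finally show ?thesis
    unfolding T_op_eq_integral[OF g] T_op_eq_integral[OF f] right_diff_distrib[symmetric]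
    using integrable_T_integrand[OF g] integrable_T_integrand[OF f] c1_pos
    by (simp add: abs_mult)
qed

text \<open>Dominated convergence: off a countable set the right derivatives converge pointwise.\<close>

lemma integral_deriv_gap_tendsto:
  assumes f: "f \<in> V1 \<alpha>" and fs: "\<And>n. fs n \<in> V1 \<alpha>" and lim: "\<And>x. (\<lambda>n. fs n x) \<longlonglongrightarrow> f x"
  shows "(\<lambda>n. integral\<^sup>L lborel (deriv_gap M (fs n) f)) \<longlonglongrightarrow> 0"
proof -
  define w where "w \<xi> = 2 * (4 * (1 + M^2) * majorant \<xi>)" for \<xi>
  have "(\<lambda>n. integral\<^sup>L lborel (deriv_gap M (fs n) f)) \<longlonglongrightarrow> integral\<^sup>L lborel (\<lambda>_::real. 0::real)"
  proof (rule integral_dominated_convergence[where w = w])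
    show "integrable lborel w"
      using integrable_majorant unfolding w_def[abs_def] by simp
    show "deriv_gap M (fs n) f \<in> borel_measurable lborel" for n
      using integrable_deriv_gap[OF fs f] by (rule borel_measurable_integrable)
    show "AE \<xi> in lborel. norm (deriv_gap M (fs n) f \<xi>) \<le> w \<xi>" for n
      using deriv_gap_le_majorant[OF fs f] by (intro AE_I2) (simp add: w_def deriv_gap_def kernel_weight_nonneg)
    have "AE \<xi> in lborel. \<xi> \<notin> {\<xi>. 0 < \<xi> \<and> \<not> isCont (right_slope (\<lambda>s. f (sqrt s))) (\<xi>^2)}"
      by (rule AE_discrete_difference[OF countable_discont_right_slope_sq[OF V1_convex_sqrt[OF f]]]) auto
    then show "AE \<xi> in lborel. (\<lambda>n. deriv_gap M (fs n) f \<xi>) \<longlonglongrightarrow> 0"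
    proof eventually_elim
      case (elim \<xi>)
      show ?case
      proof (cases "0 < \<xi>")
        case True
        then have "(\<lambda>n. right_deriv (fs n) \<xi>) \<longlonglongrightarrow> right_deriv f \<xi>"
          using elim by (intro right_deriv_tendsto[OF f fs lim]) auto
        then have "(\<lambda>n. \<bar>right_deriv (fs n) \<xi> - right_deriv f \<xi>\<bar> * kernel_weight M \<xi>)
            \<longlonglongrightarrow> \<bar>right_deriv f \<xi> - right_deriv f \<xi>\<bar> * kernel_weight M \<xi>"
          by (intro tendsto_intros)
        then show ?thesis using True by (simp add: deriv_gap_def)
      qed (simp add: deriv_gap_def)
    qed
  qed simp
  then show ?thesis by simp
qed

lemma T_op_uniform_limit:
  assumes f: "f \<in> V1 \<alpha>" and fs: "\<And>n. fs n \<in> V1 \<alpha>" and lim: "\<And>x. (\<lambda>n. fs n x) \<longlonglongrightarrow> f x"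
  shows "uniform_limit {-M..M} (\<lambda>n. T_op \<alpha> (fs n)) (T_op \<alpha> f) sequentially"
proof -
  define bound where "bound n = c1 \<alpha> * (F1_const (1 - 2*\<alpha>) * integral\<^sup>L lborel (deriv_gap M (fs n) f))" for n
  have "\<forall>n. \<forall>x\<in>{-M..M}. norm (T_op \<alpha> (fs n) x - T_op \<alpha> f x) \<le> bound n"
  proof (intro allI ballI)
    fix n x assume "x \<in> {-M..M}"
    then have "\<bar>x\<bar> \<le> M" by auto
    then show "norm (T_op \<alpha> (fs n) x - T_op \<alpha> f x) \<le> bound n"
      unfolding bound_def real_norm_def by (rule abs_T_op_diff_le[OF fs f])
  qed
  moreover have "bound \<longlonglongrightarrow> c1 \<alpha> * (F1_const (1 - 2*\<alpha>) * 0)"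
    unfolding bound_def[abs_def] by (intro tendsto_mult_left integral_deriv_gap_tendsto[OF f fs lim])
  then have "uniform_limit {-M..M} (\<lambda>n _. bound n) (\<lambda>_. 0) sequentially"
    by (intro uniform_limit_of_tendsto) simp
  ultimately have "uniform_limit {-M..M} (\<lambda>n x. T_op \<alpha> (fs n) x - T_op \<alpha> f x) (\<lambda>_. 0) sequentially"
    by (rule uniform_limit_null_comparison[OF always_eventually, where g = "\<lambda>n _. bound n"])
  from uniform_limit_add[OF this uniform_limit_const[where c = "T_op \<alpha> f"]] show ?thesis by simp
qed

definition c_integrand :: "(real \<Rightarrow> real) \<Rightarrow> real \<Rightarrow> real" where
  "c_integrand f \<xi> = indicator {0<..} \<xi> * ((1 - f \<xi>) / \<xi> powr (1 + 2*\<alpha>))"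

lemma c_f_eq_integral: "c_f \<alpha> f = (2*\<alpha>*(1 + 2*\<alpha>)/3) * c1 \<alpha> * integral\<^sup>L lborel (c_integrand f)"
  unfolding c_f_def set_lebesgue_integral_def c_integrand_def[abs_def] by simp

lemma c_integrand_bounds:
  assumes f: "f \<in> V1 \<alpha>"
  shows "0 \<le> c_integrand f \<xi>" "c_integrand f \<xi> \<le> majorant \<xi>"
proof -
  have gap: "0 \<le> 1 - f \<xi>" "1 - f \<xi> \<le> min 1 (\<xi>^2)"
    using V1_le_one[OF f, of \<xi>] V1_lower_bound[OF f, of \<xi>] by auto
  then show "0 \<le> c_integrand f \<xi>" by (simp add: c_integrand_def)
  show "c_integrand f \<xi> \<le> majorant \<xi>"
  proof (cases "0 < \<xi>")
    case True
    then have "(1 - f \<xi>) / \<xi> powr (1 + 2*\<alpha>) \<le> min 1 (\<xi>^2) / \<xi> powr (1 + 2*\<alpha>)"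
      using gap by (intro divide_right_mono) auto
    then show ?thesis using True min_sq_div_powr_le_majorant[OF True] by (simp add: c_integrand_def)
  qed (simp add: c_integrand_def majorant_nonneg)
qed

lemma integrable_c_integrand:
  assumes f: "f \<in> V1 \<alpha>"
  shows "integrable lborel (c_integrand f)"
proof (rule Bochner_Integration.integrable_bound)
  show "integrable lborel majorant" by (rule integrable_majorant)
  have "f \<in> borel_measurable borel"
    using V1_continuous[OF f] by (rule borel_measurable_continuous_onI)
  then show "c_integrand f \<in> borel_measurable lborel"
    unfolding c_integrand_def[abs_def] by measurable
  show "AE \<xi> in lborel. norm (c_integrand f \<xi>) \<le> norm (majorant \<xi>)"
    using c_integrand_bounds[OF f] majorant_nonneg by (intro AE_I2) simp
qed

text \<open>Positivity of \<open>c(f)\<close> is where the slope condition at \<open>1/2\<close> enters: it forces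
  \<open>f (1/2) < 1\<close>, so \<open>1 - f\<close> is bounded below on \<open>[1/2, 1]\<close>.\<close>

lemma c_f_pos:
  assumes f: "f \<in> V1 \<alpha>"
  shows "0 < c_f \<alpha> f"
proof -
  define d where "d = 1 - f (1/2)"
  have d: "0 < d" using V1_half_lt_one[OF alpha_pos alpha_lt_1 f] by (simp add: d_def)
  have "indicator {1/2..1} \<xi> * d \<le> c_integrand f \<xi>" for \<xi> :: real
  proof (cases "\<xi> \<in> {1/2..1}")
    case True
    then have "d \<le> 1 - f \<xi>" using V1_antimono[OF f, of "1/2" \<xi>] by (simp add: d_def)
    also have "\<dots> \<le> (1 - f \<xi>) / \<xi> powr (1 + 2*\<alpha>)"
    proof -
      have P: "0 < \<xi> powr (1 + 2*\<alpha>)" "\<xi> powr (1 + 2*\<alpha>) \<le> 1"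
        using True alpha_pos by (auto intro: powr_le1)
      then have "(1 - f \<xi>) * \<xi> powr (1 + 2*\<alpha>) \<le> (1 - f \<xi>) * 1"
        using V1_le_one[OF f, of \<xi>] by (intro mult_left_mono) auto
      then show ?thesis using P by (simp add: le_divide_eq)
    qed
    finally show ?thesis using True by (simp add: c_integrand_def)
  qed (simp add: c_integrand_bounds[OF f])
  moreover have "integrable lborel (\<lambda>\<xi>. indicator {1/2..1::real} \<xi> * d)"
  proof (intro integrable_mult_left integrable_real_indicator)
    have "emeasure lborel {1/2..1::real} = ennreal (1/2)" by simp
    then show "emeasure lborel {1/2..1::real} < \<infinity>" using ennreal_less_top[of "1/2"] by simp
  qed simp
  ultimately have "integral\<^sup>L lborel (\<lambda>\<xi>. indicator {1/2..1::real} \<xi> * d) \<le> integral\<^sup>L lborel (c_integrand f)"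
    using integrable_c_integrand[OF f] by (intro Bochner_Integration.integral_mono) auto
  then have "0 < integral\<^sup>L lborel (c_integrand f)" using d by simp
  then show ?thesis unfolding c_f_eq_integral using alpha_pos c1_pos by simp
qed

lemma c_f_tendsto:
  assumes f: "f \<in> V1 \<alpha>" and fs: "\<And>n. fs n \<in> V1 \<alpha>" and lim: "\<And>x. (\<lambda>n. fs n x) \<longlonglongrightarrow> f x"
  shows "(\<lambda>n. c_f \<alpha> (fs n)) \<longlonglongrightarrow> c_f \<alpha> f"
proof -
  have "(\<lambda>n. integral\<^sup>L lborel (c_integrand (fs n))) \<longlonglongrightarrow> integral\<^sup>L lborel (c_integrand f)"
  proof (rule integral_dominated_convergence[where w = majorant])
    show "c_integrand f \<in> borel_measurable lborel"
      using integrable_c_integrand[OF f] by (rule borel_measurable_integrable)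
    show "c_integrand (fs n) \<in> borel_measurable lborel" for n
      using integrable_c_integrand[OF fs] by (rule borel_measurable_integrable)
    show "AE \<xi> in lborel. norm (c_integrand (fs n) \<xi>) \<le> majorant \<xi>" for n
      using c_integrand_bounds[OF fs] by (intro AE_I2) simp
    show "AE \<xi> in lborel. (\<lambda>n. c_integrand (fs n) \<xi>) \<longlonglongrightarrow> c_integrand f \<xi>"
      unfolding c_integrand_def divide_inverse by (intro AE_I2 tendsto_intros lim)
  qed (rule integrable_majorant)
  then show ?thesis unfolding c_f_eq_integral by (intro tendsto_intros)
qed

lemma R_op_bounds:
  assumes f: "f \<in> V1 \<alpha>"
  shows "0 \<le> R_op \<alpha> f x" "R_op \<alpha> f x \<le> 1"
  using T_op_nonpos[OF f, of x] c_f_pos[OF f] by (auto simp: R_op_def divide_nonpos_pos)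

lemma R_op_uniform_limit:
  assumes f: "f \<in> V1 \<alpha>" and fs: "\<And>n. fs n \<in> V1 \<alpha>" and lim: "\<And>x. (\<lambda>n. fs n x) \<longlonglongrightarrow> f x"
  shows "uniform_limit {-M..M} (\<lambda>n. R_op \<alpha> (fs n)) (R_op \<alpha> f) sequentially"
proof -
  have "bounded (T_op \<alpha> f ` {-M..M})"
  proof (rule boundedI)
    fix y assume "y \<in> T_op \<alpha> f ` {-M..M}"
    then obtain x where "x \<in> {-M..M}" "y = T_op \<alpha> f x" by auto
    moreover from this have "\<bar>x\<bar> \<le> M" by auto
    ultimately show "norm y \<le> c1 \<alpha> * (F1_const (1 - 2*\<alpha>) * (4 * (1 + M^2) * integral\<^sup>L lborel majorant))"
      using abs_T_op_le[OF f] by simp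
  qed
  moreover have "uniform_limit {-M..M} (\<lambda>n _. c_f \<alpha> (fs n)) (\<lambda>_. c_f \<alpha> f) sequentially"
    using c_f_tendsto[OF f fs lim] by (rule uniform_limit_of_tendsto)
  ultimately have quotient: "uniform_limit {-M..M} (\<lambda>n x. T_op \<alpha> (fs n) x / c_f \<alpha> (fs n))
      (\<lambda>x. T_op \<alpha> f x / c_f \<alpha> f) sequentially"
    using T_op_uniform_limit[OF f fs lim] c_f_pos[OF f]
    by (intro uniform_lim_divide[where b = "c_f \<alpha> f"]) auto
  have "\<bar>max 0 (1 + a) - max 0 (1 + b)\<bar> \<le> \<bar>a - b\<bar>" for a b :: real
    by (auto simp: max_def)
  then show ?thesis
    unfolding R_op_def
    by (intro metric_uniform_limit_imp_uniform_limit[OF quotient] always_eventually)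
       (simp add: dist_real_def)
qed

lemma wnorm_R_op_tendsto:
  assumes f: "f \<in> V1 \<alpha>" and fs: "\<And>n. fs n \<in> V1 \<alpha>" and lim: "\<And>x. (\<lambda>n. fs n x) \<longlonglongrightarrow> f x"
  shows "(\<lambda>n. wnorm \<alpha> (\<lambda>x. R_op \<alpha> (fs n) x - R_op \<alpha> f x)) \<longlonglongrightarrow> 0"
proof -
  have bounded: "\<bar>R_op \<alpha> (fs n) x - R_op \<alpha> f x\<bar> \<le> 1" for n x
    using R_op_bounds[OF fs[of n], of x] R_op_bounds[OF f, of x] by (simp add: abs_le_iff)
  show ?thesis
  proof (rule order_tendstoI)
    fix y :: real assume "y < 0"
    then show "eventually (\<lambda>n. y < wnorm \<alpha> (\<lambda>x. R_op \<alpha> (fs n) x - R_op \<alpha> f x)) sequentially"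
      using wnorm_nonneg[OF less_imp_le[OF alpha_pos] bounded] by (intro always_eventually) (auto intro: less_le_trans)
  next
    fix \<epsilon> :: real assume \<epsilon>: "0 < \<epsilon>"
    define M where "M = (\<epsilon>/2) powr (-1/\<alpha>)"
    have "eventually (\<lambda>n. \<forall>x\<in>{-M..M}. dist (R_op \<alpha> (fs n) x) (R_op \<alpha> f x) < \<epsilon>/2) sequentially"
      using uniform_limitD[OF R_op_uniform_limit[OF f fs lim], of "\<epsilon>/2"] \<epsilon> by simp
    then show "eventually (\<lambda>n. wnorm \<alpha> (\<lambda>x. R_op \<alpha> (fs n) x - R_op \<alpha> f x) < \<epsilon>) sequentially"
    proof eventually_elim
      case (elim n)
      have "wnorm \<alpha> (\<lambda>x. R_op \<alpha> (fs n) x - R_op \<alpha> f x) \<le> \<epsilon>/2"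
      proof (rule wnorm_le_if_small_on_interval[OF alpha_pos _ bounded])
        fix x assume "\<bar>x\<bar> \<le> (\<epsilon>/2) powr (-1/\<alpha>)"
        then have "x \<in> {-M..M}" by (auto simp: M_def)
        with elim have "dist (R_op \<alpha> (fs n) x) (R_op \<alpha> f x) < \<epsilon>/2" by blast
        then show "\<bar>R_op \<alpha> (fs n) x - R_op \<alpha> f x\<bar> \<le> \<epsilon>/2" by (simp add: dist_real_def)
      qed (use \<epsilon> in simp)
      then show ?case using \<epsilon> by simp
    qed
  qed
qed

end

lemma eps_delta_if_sequential:
  fixes d e :: "'a \<Rightarrow> real"
  assumes nonneg: "\<And>g. g \<in> S \<Longrightarrow> 0 \<le> d g"
    and seq: "\<And>gs. (\<And>n. gs n \<in> S) \<Longrightarrow> (\<lambda>n. d (gs n)) \<longlonglongrightarrow> 0 \<Longrightarrow> (\<lambda>n. e (gs n)) \<longlonglongrightarrow> 0"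
  shows "\<forall>\<epsilon>>0. \<exists>\<delta>>0. \<forall>g\<in>S. d g < \<delta> \<longrightarrow> e g < \<epsilon>"
proof (intro allI impI, rule ccontr)
  fix \<epsilon> :: real assume \<epsilon>: "0 < \<epsilon>" and no_\<delta>: "\<not> (\<exists>\<delta>>0. \<forall>g\<in>S. d g < \<delta> \<longrightarrow> e g < \<epsilon>)"
  have "\<exists>g. g \<in> S \<and> d g < inverse (Suc n) \<and> \<epsilon> \<le> e g" for n :: nat
  proof -
    have "0 < inverse (real (Suc n))" by simp
    with no_\<delta> have "\<not> (\<forall>g\<in>S. d g < inverse (Suc n) \<longrightarrow> e g < \<epsilon>)" by blast
    then show ?thesis by (auto simp: not_less)
  qed
  then obtain gs where gs: "\<And>n. gs n \<in> S" "\<And>n. d (gs n) < inverse (Suc n)" "\<And>n. \<epsilon> \<le> e (gs n)"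
    by metis
  have "(\<lambda>n. d (gs n)) \<longlonglongrightarrow> 0"
  proof (rule tendsto_sandwich[OF _ _ tendsto_const LIMSEQ_inverse_real_of_nat])
    show "eventually (\<lambda>n. 0 \<le> d (gs n)) sequentially" using nonneg[OF gs(1)] by simp
    show "eventually (\<lambda>n. d (gs n) \<le> inverse (Suc n)) sequentially" using gs(2) by (simp add: less_imp_le)
  qed
  then have "(\<lambda>n. e (gs n)) \<longlonglongrightarrow> 0" by (rule seq[of gs, OF gs(1)])
  then have "eventually (\<lambda>n. e (gs n) < \<epsilon>) sequentially" using \<epsilon> by (rule order_tendstoD(2))
  then obtain N where "e (gs N) < \<epsilon>" by (auto simp: eventually_sequentially)
  then show False using gs(3)[of N] by simp
qed

theorem mainTheorem7:
  fixes \<alpha> :: real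
  assumes "0 < \<alpha>" and "\<alpha> < 1"
  shows "\<forall>f\<in>V1 \<alpha>. \<forall>\<epsilon>>0. \<exists>\<delta>>0. \<forall>g\<in>V1 \<alpha>.
           wnorm \<alpha> (\<lambda>x. g x - f x) < \<delta> \<longrightarrow>
           wnorm \<alpha> (\<lambda>x. R_op \<alpha> g x - R_op \<alpha> f x) < \<epsilon>"
proof
  fix f assume f: "f \<in> V1 \<alpha>"
  show "\<forall>\<epsilon>>0. \<exists>\<delta>>0. \<forall>g\<in>V1 \<alpha>.
      wnorm \<alpha> (\<lambda>x. g x - f x) < \<delta> \<longrightarrow> wnorm \<alpha> (\<lambda>x. R_op \<alpha> g x - R_op \<alpha> f x) < \<epsilon>"
  proof (rule eps_delta_if_sequential)
    show "0 \<le> wnorm \<alpha> (\<lambda>x. g x - f x)" if "g \<in> V1 \<alpha>" for g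
      by (rule wnorm_nonneg[OF less_imp_le[OF assms(1)] V1_diff_bounded[OF that f]])
  next
    fix gs assume gs: "\<And>n. gs n \<in> V1 \<alpha>" and lim: "(\<lambda>n. wnorm \<alpha> (\<lambda>x. gs n x - f x)) \<longlonglongrightarrow> 0"
    have "(\<lambda>n. gs n x - f x) \<longlonglongrightarrow> 0" for x
      by (rule tendsto_if_wnorm_tendsto[OF less_imp_le[OF assms(1)] V1_diff_bounded[OF gs f] lim])
    then have "(\<lambda>n. gs n x) \<longlonglongrightarrow> f x" for x
      by (rule LIM_zero_cancel)
    then show "(\<lambda>n. wnorm \<alpha> (\<lambda>x. R_op \<alpha> (gs n) x - R_op \<alpha> f x)) \<longlonglongrightarrow> 0"
      by (rule wnorm_R_op_tendsto[OF assms f gs])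
  qed
qed

end
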